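(* Let $\delta\in(0,1)$, let $X\subset\mathbb{R}_+$ be a Borel set with $0\in X$, and let $x_0>0$. Let $\bar p$ be the stationary decision rule with $\bar p(y)=\frac{1-\delta}{2-\delta}$ for every best-so-far alternative $y$ (i.e. it stops with probability $\frac{1-\delta}{2-\delta}$ after every history). Then: (a) $R_{\bar p}(x_0,\mathcal F_X)\ge 1/4$; (b) if $\sup X=\infty$, then $\bar p$ is dynamically robust for $(x_0,\mathcal F_X)$.
   Context: Sequential search model. Fix a discount factor $\delta\in(0,1)$, a Borel set $X\subset\mathbb{R}_+$ with $0\in X$, and an outside option $x_0>0$. Let $\mathcal F_X$ be the set of all Borel probability distributions on $X$ with finite mean ("environments"); a set of feasible environments is any $\mathcal F\subset\mathcal F_X$. A history is $h_t=(x_0,x_1,\dots,x_t)$, $t\ge 0$, $x_i\in X$; its best-so-far alternative is $y_t=\max\{x_0,\dots,x_t\}$; $\mathcal H(x_0)$ is the set of all such histories. A decision rule $p$ assigns to each history $h$ a stopping probability $p(h)\in[0,1]$; it is stationary if $p(h)$ depends on $h$ only through its best-so-far alternative, written $p(y)$. Given an environment $F$ and a history $h_t$, the future alternatives are i.i.d. with law $F$; at each round $s\ge t$ the individual stops with probability $p(h_s)$ (otherwise observes the next alternative), and stopping at round $s$ yields $\delta^{s-t}y_s$ (never stopping yields $0$). $U_p(F,h_t)$ is the expected payoff, and $V(F,h)=\sup_pU_p(F,h)$. A prior is a finitely supported probability distribution $\mu$ on $\mathcal F$; $\Delta(\mathcal F)$ is the set of priors. An environment or prior is consistent with $h_t$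 if $x_1,\dots,x_t$ occurs with positive probability under it; $\mathcal F(h)$, $\Delta(\mathcal F(h))$ denote the consistent ones. For consistent $\mu$, $U_p(\mu,h)=\sum_F\mu(F\mid h)U_p(F,h)$ with $\mu(\cdot\mid h)$ the Bayesian posterior, and $V(\mu,h)=\sup_pU_p(\mu,h)$. The performance ratio is $R_p(x_0,\mathcal F)=\inf_{h\in\mathcal H(x_0)}\inf_{\mu\in\Delta(\mathcal F(h))}U_p(\mu,h)/V(\mu,h)$, $R^*(x_0,\mathcal F)=\sup_pR_p(x_0,\mathcal F)$ over all decision rules, and $p$ is dynamically robust if $R_p(x_0,\mathcal F)=R^*(x_0,\mathcal F)$. *)

theory Defs
  imports "HOL-Probability.Probability"
begin

text \<open>Histories are lists h = x0 # [x1,...,xt]; a decision rule is a function from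
  histories to stopping probabilities.\<close>

definition best_so_far :: "real list \<Rightarrow> real" where
  "best_so_far h = Max (set h)"

definition decision_rules :: "(real list \<Rightarrow> real) set" where
  "decision_rules = {p. \<forall>h. 0 \<le> p h \<and> p h \<le> 1}"

definition envs :: "real set \<Rightarrow> real measure set" where
  "envs X = {F. prob_space F \<and> sets F = sets borel \<and> emeasure F X = 1
                \<and> (\<integral>\<^sup>+ x. ennreal x \<partial>F) < \<infinity>}"

definition histories :: "real set \<Rightarrow> real \<Rightarrow> real list set" where
  "histories X x0 = {x0 # xs | xs. set xs \<subseteq> X}"

text \<open>Expected discounted payoff from stopping exactly n rounds after history h.\<close>
fun stop_term :: "real \<Rightarrow> (real list \<Rightarrow> real) \<Rightarrow> real measure \<Rightarrow> nat \<Rightarrow> real list \<Rightarrow> ennreal" where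
  "stop_term \<delta> p F 0 h = ennreal (p h) * ennreal (best_so_far h)"
| "stop_term \<delta> p F (Suc n) h =
     ennreal ((1 - p h) * \<delta>) * (\<integral>\<^sup>+ x. stop_term \<delta> p F n (h @ [x]) \<partial>F)"

definition U_env :: "real \<Rightarrow> (real list \<Rightarrow> real) \<Rightarrow> real measure \<Rightarrow> real list \<Rightarrow> ennreal" where
  "U_env \<delta> p F h = (\<Sum>n. stop_term \<delta> p F n h)"

definition likelihood :: "real measure \<Rightarrow> real list \<Rightarrow> real" where
  "likelihood F h = (\<Prod>x\<leftarrow>tl h. measure F {x})"

definition consistent_envs :: "real measure set \<Rightarrow> real list \<Rightarrow> real measure set" where
  "consistent_envs FS h = {F \<in> FS. likelihood F h > 0}"

definition priors :: "real measure set \<Rightarrow> real measure pmf set" where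
  "priors FS = {\<mu>. finite (set_pmf \<mu>) \<and> set_pmf \<mu> \<subseteq> FS}"

definition posterior :: "real measure pmf \<Rightarrow> real list \<Rightarrow> real measure \<Rightarrow> real" where
  "posterior \<mu> h F = pmf \<mu> F * likelihood F h /
      (\<Sum>G\<in>set_pmf \<mu>. pmf \<mu> G * likelihood G h)"

definition U_prior :: "real \<Rightarrow> (real list \<Rightarrow> real) \<Rightarrow> real measure pmf \<Rightarrow> real list \<Rightarrow> ennreal" where
  "U_prior \<delta> p \<mu> h = (\<Sum>F\<in>set_pmf \<mu>. ennreal (posterior \<mu> h F) * U_env \<delta> p F h)"

definition V_prior :: "real \<Rightarrow> real measure pmf \<Rightarrow> real list \<Rightarrow> ennreal" where
  "V_prior \<delta> \<mu> h = (SUP p\<in>decision_rules. U_prior \<delta> p \<mu> h)"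

definition perf_ratio :: "real \<Rightarrow> real set \<Rightarrow> real \<Rightarrow> real measure set \<Rightarrow> (real list \<Rightarrow> real) \<Rightarrow> ennreal" where
  "perf_ratio \<delta> X x0 FS p =
     (INF h\<in>histories X x0. INF \<mu>\<in>priors (consistent_envs FS h).
        U_prior \<delta> p \<mu> h / V_prior \<delta> \<mu> h)"

definition opt_ratio :: "real \<Rightarrow> real set \<Rightarrow> real \<Rightarrow> real measure set \<Rightarrow> ennreal" where
  "opt_ratio \<delta> X x0 FS = (SUP p\<in>decision_rules. perf_ratio \<delta> X x0 FS p)"

definition dyn_robust :: "real \<Rightarrow> real set \<Rightarrow> real \<Rightarrow> real measure set \<Rightarrow> (real list \<Rightarrow> real) \<Rightarrow> bool" where
  "dyn_robust \<delta> X x0 FS p \<longleftrightarrow> perf_ratio \<delta> X x0 FS p = opt_ratio \<delta> X x0 FS"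

end

theory Submission
  imports Defs
begin

text \<open>
  (a) In an environment F let v be the reservation value, the solution of v = \<delta> E max(v, x).
  Induction on the horizon shows that no decision rule earns more than max(y, v) after a
  history with best-so-far alternative y. The stationary rule stopping with probability
  q = (1 - \<delta>)/(2 - \<delta>) earns \<Psi>(y), where \<Psi>(y) = q y + r E \<Psi>(max(y, x)) with
  r = (1 - q) \<delta>. The bounded function (y + max(y, v))/4 is a subsolution of this contracting
  equation, hence \<Psi>(y) \<ge> max(y, v)/4, in every environment and so under every posterior.

  (b) Fix any rule p and let A be the supremum of U_p(P, h)/y over histories h and finitely
  supported environments P on X whose atoms are at most the best-so-far alternative y of h.
  Choose (h, P) whose ratio a is within \<eta> of A and add to P an atom of small probability \<epsilon>
  at a huge L \<in> X. Waiting for L earns about \<delta>\<epsilon>L/(1 - \<delta>), whereas p earns at most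
  a y + (\<delta>\<epsilon>L/(1 - \<delta>)) A (1 - a), since once L has appeared p secures at most A L. As
  A (1 - a) \<le> A (1 - A + \<eta>) \<le> 1/4 + \<eta>, the performance ratio of p is at most 1/4.
\<close>

lemma best_so_far_snoc: "h \<noteq> [] \<Longrightarrow> best_so_far (h @ [x]) = max (best_so_far h) x"
  unfolding best_so_far_def by (simp add: Max_insert max.commute)

lemma best_so_far_singleton [simp]: "best_so_far [y] = y"
  unfolding best_so_far_def by simp

lemma best_so_far_pair [simp]: "best_so_far [y, x] = max y x"
  unfolding best_so_far_def by (simp add: max.commute)

lemma hd_le_best_so_far: "x0 \<le> best_so_far (x0 # xs)"
  unfolding best_so_far_def by simp

lemma decision_rulesD: "p \<in> decision_rules \<Longrightarrow> 0 \<le> p h \<and> p h \<le> 1"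
  unfolding decision_rules_def by auto

lemma ennreal_max: "ennreal (max a b) = max (ennreal a) (ennreal b)"
  by (cases "a \<le> b") (auto simp: max_def ennreal_leI ennreal_le_iff2 intro: antisym ennreal_leI)

lemma ennreal_quarter: "ennreal (1/4) = 1/4"
  using divide_ennreal[of 1 4] by simp

lemma ennreal_le_divide_of_bound:
  fixes U V K c :: ennreal
  assumes "V \<le> K" "c * K \<le> U" "0 < K" "K < top"
  shows "c \<le> U / V"
proof (cases "V = 0")
  case True
  show ?thesis
  proof (cases "U = 0")
    case True
    then have "c * K = 0" using assms(2) by simp
    then have "c = 0" using assms(3) by auto
    then show ?thesis by simp
  next
    case False then show ?thesis using \<open>V = 0\<close> by simp
  qed
next
  case False
  have "V < top" using assms(1,4) by (rule le_less_trans)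
  have "\<not> U / V < c"
  proof
    assume "U / V < c"
    then have "U < c * V" using False \<open>V < top\<close> by (simp add: divide_less_ennreal)
    moreover have "c * V \<le> c * K" using assms(1) by (rule mult_left_mono) simp
    ultimately show False using assms(2) by simp
  qed
  then show ?thesis by simp
qed

text \<open>No measurability is assumed: the payoff of an arbitrary decision rule need not be
  measurable in the next alternative.\<close>
lemma nn_integral_superadditive:
  "integral\<^sup>N M f + integral\<^sup>N M g \<le> (\<integral>\<^sup>+x. f x + g x \<partial>M)"
proof -
  have simple: "integral\<^sup>S M a + integral\<^sup>S M b \<le> (\<integral>\<^sup>+x. f x + g x \<partial>M)"
    if a: "simple_function M a" "a \<le> f" and b: "simple_function M b" "b \<le> g" for a b
  proof -
    have "integral\<^sup>S M a + integral\<^sup>S M b = (\<integral>\<^sup>Sx. a x + b x \<partial>M)"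
      using a b by (simp add: simple_integral_add)
    also have "\<dots> \<le> (\<integral>\<^sup>+x. f x + g x \<partial>M)"
      unfolding nn_integral_def
      by (rule SUP_upper) (use a b in \<open>auto simp: le_fun_def intro: add_mono\<close>)
    finally show ?thesis .
  qed
  define A where "A = {a. simple_function M a \<and> a \<le> f}"
  define B where "B = {b. simple_function M b \<and> b \<le> g}"
  have A: "A \<noteq> {}" unfolding A_def by (auto intro!: exI[of _ "\<lambda>_. 0"] simp: le_fun_def)
  have B: "B \<noteq> {}" unfolding B_def by (auto intro!: exI[of _ "\<lambda>_. 0"] simp: le_fun_def)
  have "(SUP a\<in>A. integral\<^sup>S M a) + (SUP b\<in>B. integral\<^sup>S M b) \<le> (\<integral>\<^sup>+x. f x + g x \<partial>M)"
    unfolding ennreal_SUP_add_left[OF A, symmetric]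
  proof (rule SUP_least)
    fix a assume "a \<in> A"
    show "integral\<^sup>S M a + (SUP b\<in>B. integral\<^sup>S M b) \<le> (\<integral>\<^sup>+x. f x + g x \<partial>M)"
      unfolding ennreal_SUP_add_right[OF B]
      by (rule SUP_least) (use \<open>a \<in> A\<close> simple in \<open>auto simp: A_def B_def\<close>)
  qed
  then show ?thesis unfolding A_def B_def nn_integral_def[of M f] nn_integral_def[of M g] .
qed

lemma nn_integral_sum_superadditive:
  "(\<Sum>i\<in>I. integral\<^sup>N M (f i)) \<le> (\<integral>\<^sup>+x. (\<Sum>i\<in>I. f i x) \<partial>M)"
proof (induction I rule: infinite_finite_induct)
  case (insert i I)
  have "(\<Sum>i\<in>insert i I. integral\<^sup>N M (f i)) = integral\<^sup>N M (f i) + (\<Sum>i\<in>I. integral\<^sup>N M (f i))"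
    using insert by simp
  also have "\<dots> \<le> integral\<^sup>N M (f i) + (\<integral>\<^sup>+x. (\<Sum>i\<in>I. f i x) \<partial>M)"
    using insert by (intro add_left_mono) auto
  also have "\<dots> \<le> (\<integral>\<^sup>+x. f i x + (\<Sum>i\<in>I. f i x) \<partial>M)"
    by (rule nn_integral_superadditive)
  also have "\<dots> = (\<integral>\<^sup>+x. (\<Sum>i\<in>insert i I. f i x) \<partial>M)"
    using insert by simp
  finally show ?case .
qed auto

section \<open>The reservation value\<close>

locale search_env = prob_space F for F :: "real measure" +
  fixes \<delta> :: real
  assumes sets_env: "sets F = sets borel"
    and finite_mean: "(\<integral>\<^sup>+x. ennreal x \<partial>F) < \<infinity>"
    and discount_pos: "0 < \<delta>" and discount_less_1: "\<delta> < 1"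
begin

lemma borel_measurable_env:
  fixes f :: "real \<Rightarrow> 'b::topological_space"
  shows "f \<in> borel_measurable borel \<Longrightarrow> f \<in> borel_measurable F"
  using measurable_cong_sets[OF sets_env refl, of "borel :: 'b measure"] by simp

definition expected_max :: "ennreal \<Rightarrow> ennreal" where
  "expected_max u = (\<integral>\<^sup>+x. max u (ennreal x) \<partial>F)"

definition env_mean :: ennreal where
  "env_mean = (\<integral>\<^sup>+x. ennreal x \<partial>F)"

definition reservation_bound :: ennreal where
  "reservation_bound = ennreal (\<delta> / (1 - \<delta>)) * env_mean"

text \<open>The largest post-fixed point of v \<mapsto> \<delta> E max(v, x) below the a-priori bound
  \<delta> E x / (1 - \<delta>); it is a fixed point (Knaster--Tarski).\<close>
definition reservation_value :: ennreal where
  "reservation_value = Sup {v. v \<le> reservation_bound \<and> v \<le> ennreal \<delta> * expected_max v}"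

lemma borel_measurable_max_ennreal [measurable]: "(\<lambda>x. max u (ennreal x)) \<in> borel_measurable F"
  by (rule borel_measurable_env) measurable

lemma borel_measurable_ennreal [measurable]: "(\<lambda>x. ennreal x) \<in> borel_measurable F"
  by (rule borel_measurable_env) measurable

lemma expected_max_mono: "u \<le> v \<Longrightarrow> expected_max u \<le> expected_max v"
  unfolding expected_max_def by (rule nn_integral_mono) (auto simp: le_max_iff_disj)

lemma expected_max_ge: "u \<le> expected_max u"
proof -
  have "u = (\<integral>\<^sup>+x. u \<partial>F)" by (simp add: emeasure_space_1)
  also have "\<dots> \<le> expected_max u" unfolding expected_max_def by (rule nn_integral_mono) auto
  finally show ?thesis .
qed

lemma expected_max_le: "expected_max u \<le> u + env_mean"
proof -
  have "expected_max u \<le> (\<integral>\<^sup>+x. u + ennreal x \<partial>F)"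
    unfolding expected_max_def
    by (rule nn_integral_mono) (auto simp: max_def add_increasing2 add_increasing)
  also have "\<dots> = u + env_mean" unfolding env_mean_def
    by (subst nn_integral_add) (auto simp: emeasure_space_1)
  finally show ?thesis .
qed

lemma env_mean_finite: "env_mean < top"
  using finite_mean unfolding env_mean_def by simp

lemma expected_max_finite: "u < top \<Longrightarrow> expected_max u < top"
  using expected_max_le[of u] env_mean_finite by (metis ennreal_add_less_top le_less_trans)

lemma reservation_bound_finite: "reservation_bound < top"
  unfolding reservation_bound_def using env_mean_finite by (simp add: ennreal_mult_less_top)

lemma reservation_bound_eq: "ennreal \<delta> * (reservation_bound + env_mean) = reservation_bound"
proof -
  have "ennreal \<delta> * (reservation_bound + env_mean)
      = ennreal \<delta> * (ennreal (\<delta> / (1 - \<delta>) + 1) * env_mean)"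
    unfolding reservation_bound_def using discount_pos discount_less_1
    by (simp add: ennreal_plus[symmetric] distrib_right)
  also have "\<dots> = ennreal (\<delta> * (\<delta> / (1 - \<delta>) + 1)) * env_mean"
    using discount_pos discount_less_1 by (simp add: ennreal_mult mult.assoc)
  also have "\<delta> * (\<delta> / (1 - \<delta>) + 1) = \<delta> / (1 - \<delta>)"
    using discount_pos discount_less_1 by (simp add: field_simps)
  finally show ?thesis unfolding reservation_bound_def .
qed

lemma reservation_value_le_bound: "reservation_value \<le> reservation_bound"
  unfolding reservation_value_def by (rule Sup_least) auto

lemma reservation_value_fixpoint: "reservation_value = ennreal \<delta> * expected_max reservation_value"
proof -
  define S where "S = {v. v \<le> reservation_bound \<and> v \<le> ennreal \<delta> * expected_max v}"
  have v_def: "reservation_value = Sup S" unfolding reservation_value_def S_def ..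
  have post: "reservation_value \<le> ennreal \<delta> * expected_max reservation_value"
    unfolding v_def
  proof (rule Sup_least)
    fix v assume "v \<in> S"
    then have "v \<le> ennreal \<delta> * expected_max v" "v \<le> Sup S" by (auto simp: S_def intro: Sup_upper)
    then show "v \<le> ennreal \<delta> * expected_max (Sup S)"
      by (meson expected_max_mono mult_left_mono order_trans zero_le)
  qed
  define w where "w = ennreal \<delta> * expected_max reservation_value"
  have "w \<le> ennreal \<delta> * (reservation_value + env_mean)"
    unfolding w_def by (intro mult_left_mono expected_max_le) auto
  also have "\<dots> \<le> ennreal \<delta> * (reservation_bound + env_mean)"
    by (intro mult_left_mono add_right_mono reservation_value_le_bound) auto
  finally have "w \<le> reservation_bound" using reservation_bound_eq by simp
  moreover have "w \<le> ennreal \<delta> * expected_max w" unfolding w_def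
    by (intro mult_left_mono expected_max_mono) (use post w_def in auto)
  ultimately have "w \<le> reservation_value" unfolding v_def by (intro Sup_upper) (simp add: S_def)
  with post show ?thesis unfolding w_def by (rule antisym)
qed

lemma reservation_value_finite: "reservation_value < top"
  using reservation_value_le_bound reservation_bound_finite by (rule le_less_trans)

lemma discounted_expected_max_le:
  assumes "reservation_value \<le> u"
  shows "ennreal \<delta> * expected_max u \<le> u"
proof (cases "u = top")
  case False
  let ?v = reservation_value
  have u_split: "u = ?v + (u - ?v)" using assms by (simp add: add_diff_inverse_ennreal)
  have "expected_max u \<le> (\<integral>\<^sup>+x. max ?v (ennreal x) + (u - ?v) \<partial>F)"
    unfolding expected_max_def
  proof (rule nn_integral_mono)
    fix x show "max u (ennreal x) \<le> max ?v (ennreal x) + (u - ?v)"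
      using u_split
      by (metis add_increasing2 add_right_mono max.cobounded1 max.cobounded2 max.boundedI zero_le)
  qed
  also have "\<dots> = expected_max ?v + (u - ?v)" unfolding expected_max_def
    by (subst nn_integral_add) (auto simp: emeasure_space_1)
  finally have "ennreal \<delta> * expected_max u \<le> ennreal \<delta> * expected_max ?v + ennreal \<delta> * (u - ?v)"
    by (metis distrib_left mult_left_mono zero_le)
  also have "\<dots> \<le> ?v + (u - ?v)"
  proof (intro add_mono)
    show "ennreal \<delta> * expected_max ?v \<le> ?v" using reservation_value_fixpoint by simp
    have "ennreal \<delta> * (u - ?v) \<le> 1 * (u - ?v)"
      by (rule mult_right_mono) (use discount_less_1 in auto)
    then show "ennreal \<delta> * (u - ?v) \<le> u - ?v" by simp
  qed
  finally show ?thesis using u_split by simp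
qed simp

lemma expected_max_exchange:
  assumes "u \<le> reservation_value"
  shows "u + expected_max reservation_value \<le> expected_max u + reservation_value"
proof -
  let ?v = reservation_value
  have "u + expected_max ?v = (\<integral>\<^sup>+x. u + max ?v (ennreal x) \<partial>F)"
    unfolding expected_max_def by (subst nn_integral_add) (auto simp: emeasure_space_1)
  also have "\<dots> \<le> (\<integral>\<^sup>+x. max u (ennreal x) + ?v \<partial>F)"
  proof (rule nn_integral_mono)
    fix x show "u + max ?v (ennreal x) \<le> max u (ennreal x) + ?v"
      using assms by (cases "ennreal x \<le> u"; cases "ennreal x \<le> ?v")
        (auto simp: max_def add.commute intro: add_mono)
  qed
  also have "\<dots> = expected_max u + ?v" unfolding expected_max_def
    by (subst nn_integral_add) (auto simp: emeasure_space_1)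
  finally show ?thesis .
qed

definition optimal_bound :: "real \<Rightarrow> ennreal" where
  "optimal_bound y = max (ennreal y) reservation_value"

lemma optimal_bound_max: "optimal_bound (max y x) = max (optimal_bound y) (ennreal x)"
  unfolding optimal_bound_def ennreal_max by (simp add: max.assoc max.commute max.left_commute)

lemma optimal_bound_ge: "ennreal y \<le> optimal_bound y" "reservation_value \<le> optimal_bound y"
  unfolding optimal_bound_def by auto

lemma optimal_bound_le: "optimal_bound y \<le> ennreal y + reservation_value"
  unfolding optimal_bound_def by (auto simp: max_def intro: add_increasing add_increasing2)

lemma optimal_bound_finite: "optimal_bound y < top"
  unfolding optimal_bound_def using reservation_value_finite by simp

text \<open>Each induction step uses that max(y, v) dominates its own one-step continuation
  \<delta> E max(y, v, x).\<close>
lemma stop_term_sum_le_optimal_bound: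
  assumes p: "p \<in> decision_rules"
  shows "h \<noteq> [] \<Longrightarrow> (\<Sum>n<N. stop_term \<delta> p F n h) \<le> optimal_bound (best_so_far h)"
proof (induction N arbitrary: h)
  case 0 then show ?case by simp
next
  case (Suc N)
  define y where "y = best_so_far h"
  have p01: "0 \<le> p h" "p h \<le> 1" using decision_rulesD[OF p] by auto
  have "(\<Sum>n<Suc N. stop_term \<delta> p F n h)
      = stop_term \<delta> p F 0 h + (\<Sum>n<N. stop_term \<delta> p F (Suc n) h)"
    by (rule sum.lessThan_Suc_shift)
  also have "\<dots> = ennreal (p h) * ennreal y
      + ennreal ((1 - p h) * \<delta>) * (\<Sum>n<N. \<integral>\<^sup>+x. stop_term \<delta> p F n (h @ [x]) \<partial>F)"
    by (simp add: y_def sum_distrib_left)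
  also have "\<dots> \<le> ennreal (p h) * ennreal y
      + ennreal ((1 - p h) * \<delta>) * (\<integral>\<^sup>+x. (\<Sum>n<N. stop_term \<delta> p F n (h @ [x])) \<partial>F)"
    by (intro add_left_mono mult_left_mono nn_integral_sum_superadditive) auto
  also have "\<dots> \<le> ennreal (p h) * ennreal y
      + ennreal ((1 - p h) * \<delta>) * (\<integral>\<^sup>+x. optimal_bound (max y x) \<partial>F)"
    using Suc.IH[of "h @ [_]"] Suc.prems
    by (intro add_left_mono mult_left_mono nn_integral_mono) (auto simp: best_so_far_snoc y_def)
  also have "\<dots> = ennreal (p h) * ennreal y
      + ennreal (1 - p h) * (ennreal \<delta> * expected_max (optimal_bound y))"
    unfolding optimal_bound_max expected_max_def[symmetric] using p01 discount_pos
    by (simp add: ennreal_mult mult.assoc)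
  also have "\<dots> \<le> ennreal (p h) * optimal_bound y + ennreal (1 - p h) * optimal_bound y"
    by (intro add_mono mult_left_mono discounted_expected_max_le optimal_bound_ge) auto
  also have "\<dots> = optimal_bound y" using p01
    by (simp add: distrib_right[symmetric] ennreal_plus[symmetric] del: ennreal_plus)
  finally show ?case unfolding y_def .
qed

lemma U_env_le_optimal_bound:
  "p \<in> decision_rules \<Longrightarrow> h \<noteq> [] \<Longrightarrow> U_env \<delta> p F h \<le> optimal_bound (best_so_far h)"
  unfolding U_env_def
  using ennreal_suminf_bound_add[where y=0 and f="\<lambda>n. stop_term \<delta> p F n h"]
    stop_term_sum_le_optimal_bound
  by simp

end

lemma envs_search_env: "F \<in> envs X \<Longrightarrow> 0 < \<delta> \<Longrightarrow> \<delta> < 1 \<Longrightarrow> search_env F \<delta>"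
  unfolding envs_def by (auto intro!: search_env.intro search_env_axioms.intro)

section \<open>The payoff of the stationary rule\<close>

context search_env
begin

definition stop_prob :: real where
  "stop_prob = (1 - \<delta>) / (2 - \<delta>)"

definition cont_discount :: real where
  "cont_discount = (1 - stop_prob) * \<delta>"

lemma stop_prob_cont_discount:
  "0 < stop_prob" "stop_prob < 1" "cont_discount = \<delta> / (2 - \<delta>)"
  "0 < cont_discount" "cont_discount < 1"
  using discount_pos discount_less_1 unfolding cont_discount_def stop_prob_def
  by (auto simp: field_simps)

text \<open>Evaluated at the history [y]; by stationarity this is the n-th summand of the payoff at
  every history with best-so-far alternative y.\<close>
definition pbar_term :: "nat \<Rightarrow> real \<Rightarrow> ennreal" where
  "pbar_term n y = stop_term \<delta> (\<lambda>_. stop_prob) F n [y]"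

definition pbar_value :: "real \<Rightarrow> ennreal" where
  "pbar_value y = (\<Sum>n. pbar_term n y)"

lemma stop_term_pbar:
  "h \<noteq> [] \<Longrightarrow> stop_term \<delta> (\<lambda>_. stop_prob) F n h = pbar_term n (best_so_far h)"
proof (induction n arbitrary: h)
  case 0 then show ?case by (simp add: pbar_term_def)
next
  case (Suc n)
  have "stop_term \<delta> (\<lambda>_. stop_prob) F n [best_so_far h, x]
      = pbar_term n (max (best_so_far h) x)" for x
    using Suc.IH[of "[best_so_far h, x]"] by simp
  then show ?case using Suc by (simp add: best_so_far_snoc pbar_term_def[of "Suc n"])
qed

lemma U_env_pbar: "h \<noteq> [] \<Longrightarrow> U_env \<delta> (\<lambda>_. stop_prob) F h = pbar_value (best_so_far h)"
  unfolding U_env_def pbar_value_def by (simp add: stop_term_pbar)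

lemma pbar_term_0: "pbar_term 0 y = ennreal stop_prob * ennreal y"
  by (simp add: pbar_term_def)

lemma pbar_term_Suc:
  "pbar_term (Suc n) y = ennreal cont_discount * (\<integral>\<^sup>+x. pbar_term n (max y x) \<partial>F)"
  using stop_term_pbar[of "[y] @ [_]" n]
  by (simp add: pbar_term_def[of "Suc n"] best_so_far_snoc cont_discount_def)

lemma borel_measurable_pbar_term [measurable]: "pbar_term n \<in> borel_measurable borel"
proof (induction n)
  case 0 show ?case unfolding pbar_term_0 by measurable
next
  case (Suc n)
  note Suc[measurable]
  have sets_eq:
    "borel_measurable (borel \<Otimes>\<^sub>M F) = borel_measurable (borel \<Otimes>\<^sub>M (borel :: real measure))"
    by (rule measurable_cong_sets[OF sets_pair_measure_cong[OF refl sets_env] refl])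
  have "(\<lambda>(y, x). pbar_term n (max y x)) \<in> borel_measurable (borel \<Otimes>\<^sub>M F)"
    unfolding sets_eq by measurable
  then have "(\<lambda>y. \<integral>\<^sup>+x. pbar_term n (max y x) \<partial>F) \<in> borel_measurable borel"
    by (rule borel_measurable_nn_integral[where f="\<lambda>y x. pbar_term n (max y x)", simplified])
  then show ?case unfolding pbar_term_Suc by measurable
qed

lemma borel_measurable_pbar_term_max [measurable]:
  "(\<lambda>x. pbar_term n (max y x)) \<in> borel_measurable F"
  by (rule borel_measurable_env) measurable

lemma borel_measurable_pbar_value_max [measurable]:
  "(\<lambda>x. pbar_value (max y x)) \<in> borel_measurable F"
  unfolding pbar_value_def by (rule borel_measurable_env) measurable

lemma pbar_value_rec:
  "pbar_value y = ennreal stop_prob * ennreal y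
     + ennreal cont_discount * (\<integral>\<^sup>+x. pbar_value (max y x) \<partial>F)"
proof -
  have "(\<lambda>n. pbar_term (Suc n) y) sums (\<Sum>n. pbar_term (Suc n) y)"
    by (rule summable_sums) simp
  then have "(\<lambda>n. pbar_term n y) sums ((\<Sum>n. pbar_term (Suc n) y) + pbar_term 0 y)"
    by (rule sums_Suc)
  then have "pbar_value y = (\<Sum>n. pbar_term (Suc n) y) + pbar_term 0 y"
    unfolding pbar_value_def by (rule sums_unique[symmetric])
  also have "(\<Sum>n. pbar_term (Suc n) y)
      = ennreal cont_discount * (\<Sum>n. \<integral>\<^sup>+x. pbar_term n (max y x) \<partial>F)"
    unfolding pbar_term_Suc by simp
  also have "(\<Sum>n. \<integral>\<^sup>+x. pbar_term n (max y x) \<partial>F) = (\<integral>\<^sup>+x. pbar_value (max y x) \<partial>F)"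
    unfolding pbar_value_def by (rule nn_integral_suminf[symmetric]) measurable
  finally show ?thesis by (simp add: pbar_term_0 add.commute)
qed

lemma pbar_term_ge: "0 \<le> y \<Longrightarrow> ennreal (stop_prob * cont_discount ^ n * y) \<le> pbar_term n y"
proof (induction n arbitrary: y)
  case 0 then show ?case
    using stop_prob_cont_discount by (simp add: pbar_term_0 ennreal_mult)
next
  case (Suc n)
  have "ennreal (stop_prob * cont_discount ^ Suc n * y)
      = ennreal cont_discount * (\<integral>\<^sup>+x. ennreal (stop_prob * cont_discount ^ n * y) \<partial>F)"
    using stop_prob_cont_discount Suc.prems
    by (simp add: emeasure_space_1 ennreal_mult[symmetric] mult_ac)
  also have "\<dots> \<le> ennreal cont_discount * (\<integral>\<^sup>+x. pbar_term n (max y x) \<partial>F)"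
  proof (intro mult_left_mono nn_integral_mono)
    fix x
    have "ennreal (stop_prob * cont_discount ^ n * y)
        \<le> ennreal (stop_prob * cont_discount ^ n * max y x)"
      using stop_prob_cont_discount Suc.prems by (intro ennreal_leI mult_left_mono) auto
    also have "\<dots> \<le> pbar_term n (max y x)" using Suc.prems by (intro Suc.IH) auto
    finally show "ennreal (stop_prob * cont_discount ^ n * y) \<le> pbar_term n (max y x)" .
  qed auto
  finally show ?case unfolding pbar_term_Suc .
qed

lemma pbar_value_ge_half: assumes "0 \<le> y" shows "ennreal (y / 2) \<le> pbar_value y"
proof -
  let ?q = stop_prob and ?r = cont_discount
  have "(\<lambda>n. ?r ^ n) sums (1 / (1 - ?r))"
    using stop_prob_cont_discount(4,5) by (intro geometric_sums) simp
  then have geom: "(\<lambda>n. ?q * y * ?r ^ n) sums (?q * y * (1 / (1 - ?r)))" by (rule sums_mult)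
  have limit: "?q * y * (1 / (1 - ?r)) = y / 2"
  proof -
    have r: "1 - ?r = 2 * (1 - \<delta>) / (2 - \<delta>)"
      using discount_less_1 unfolding stop_prob_cont_discount(3) by (simp add: field_simps)
    then have "?q * y * (1 / (1 - ?r)) = ?q * y * (2 - \<delta>) / (2 * (1 - \<delta>))" by simp
    also have "?q * y * (2 - \<delta>) = (1 - \<delta>) * y"
      using discount_less_1 by (simp add: stop_prob_def)
    also have "(1 - \<delta>) * y / (2 * (1 - \<delta>)) = y / 2"
      using discount_less_1 by (simp add: field_simps)
    finally show ?thesis .
  qed
  have "(\<lambda>n. ?q * ?r ^ n * y) sums (y / 2)" using geom unfolding limit by (simp add: mult_ac)
  then have "(\<lambda>n. ennreal (?q * ?r ^ n * y)) sums ennreal (y / 2)"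
    using stop_prob_cont_discount assms by (subst sums_ennreal) auto
  then have "ennreal (y / 2) = (\<Sum>n. ennreal (?q * ?r ^ n * y))" by (rule sums_unique)
  also have "\<dots> \<le> pbar_value y" unfolding pbar_value_def
    by (intro suminf_le pbar_term_ge assms) auto
  finally show ?thesis .
qed

definition quarter_bound :: "real \<Rightarrow> ennreal" where
  "quarter_bound y = ennreal (1/4) * (ennreal y + optimal_bound y)"

lemma nn_integral_quarter_bound:
  "(\<integral>\<^sup>+x. quarter_bound (max y x) \<partial>F)
     = ennreal (1/4) * (expected_max (ennreal y) + expected_max (optimal_bound y))"
proof -
  have "(\<integral>\<^sup>+x. quarter_bound (max y x) \<partial>F) = (\<integral>\<^sup>+x. ennreal (1/4)
      * (max (ennreal y) (ennreal x) + max (optimal_bound y) (ennreal x)) \<partial>F)"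
    unfolding quarter_bound_def optimal_bound_max ennreal_max ..
  also have "\<dots> = ennreal (1/4)
      * (\<integral>\<^sup>+x. max (ennreal y) (ennreal x) + max (optimal_bound y) (ennreal x) \<partial>F)"
    by (rule nn_integral_cmult) measurable
  finally show ?thesis unfolding expected_max_def by (subst (asm) nn_integral_add) auto
qed

lemma reservation_value_real: obtains v where "reservation_value = ennreal v" "0 \<le> v"
  using reservation_value_finite by (cases reservation_value rule: ennreal_cases) auto

lemma expected_max_real: assumes "u < top" obtains g where "expected_max u = ennreal g" "0 \<le> g"
  using expected_max_finite[OF assms] by (cases "expected_max u" rule: ennreal_cases) auto

lemma stop_prob_half: "stop_prob = 1/2 - cont_discount / 2"
  using discount_less_1 unfolding stop_prob_cont_discount(3) stop_prob_def
  by (simp add: field_simps)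

lemma quarter_bound_ineq_below:
  assumes "0 \<le> y" "y + g2 \<le> g1 + v" "v = \<delta> * g2"
  shows "(y + v) / 4 \<le> stop_prob * y + cont_discount * ((g1 + g2) / 4)"
proof -
  have r: "0 < cont_discount" "cont_discount < 1" "cont_discount * (2 - \<delta>) = \<delta>"
    using stop_prob_cont_discount discount_less_1 by auto
  have "cont_discount * (y + 2 * g2 - v) \<le> cont_discount * (g1 + g2)"
    using assms r by (intro mult_left_mono) auto
  moreover have "cont_discount * (y + 2 * g2 - v) = cont_discount * y + v"
    using r assms(3) by (simp add: algebra_simps)
  ultimately have "cont_discount * y + v \<le> cont_discount * (g1 + g2)" by simp
  moreover have "cont_discount * y \<le> y"
    using r assms(1) by (simp add: mult_left_le_one_le)
  ultimately show ?thesis unfolding stop_prob_half by (simp add: field_simps)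
qed

lemma quarter_bound_ineq_above:
  assumes "0 \<le> y" "y \<le> g"
  shows "(y + y) / 4 \<le> stop_prob * y + cont_discount * ((g + g) / 4)"
proof -
  show ?thesis
    unfolding stop_prob_half using assms stop_prob_cont_discount(4) by (simp add: field_simps)
qed

lemma quarter_bound_subsolution_of_real:
  assumes y: "0 \<le> y" and g1: "expected_max (ennreal y) = ennreal g1" "0 \<le> g1"
    and w: "optimal_bound y = ennreal w" "0 \<le> w"
    and gw: "expected_max (ennreal w) = ennreal gw" "0 \<le> gw"
    and ineq: "(y + w) / 4 \<le> stop_prob * y + cont_discount * ((g1 + gw) / 4)"
  shows "quarter_bound y
    \<le> ennreal stop_prob * ennreal y + ennreal cont_discount * (\<integral>\<^sup>+x. quarter_bound (max y x) \<partial>F)"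
proof -
  have "quarter_bound y = ennreal ((y + w) / 4)"
    unfolding quarter_bound_def w using y w
    by (simp add: ennreal_mult[symmetric] ennreal_plus[symmetric] del: ennreal_plus)
  also have "\<dots> \<le> ennreal (stop_prob * y + cont_discount * ((g1 + gw) / 4))"
    using ineq by (rule ennreal_leI)
  also have "\<dots> = ennreal stop_prob * ennreal y
      + ennreal cont_discount
        * (ennreal (1/4) * (expected_max (ennreal y) + expected_max (optimal_bound y)))"
    unfolding w g1 gw using stop_prob_cont_discount(1,4) y g1 gw
    by (simp add: ennreal_mult[symmetric] ennreal_plus[symmetric] del: ennreal_plus)
  finally show ?thesis unfolding nn_integral_quarter_bound .
qed

lemma quarter_bound_subsolution:
  assumes y: "0 \<le> y"
  shows "quarter_bound y
    \<le> ennreal stop_prob * ennreal y + ennreal cont_discount * (\<integral>\<^sup>+x. quarter_bound (max y x) \<partial>F)"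
proof -
  obtain v where v: "reservation_value = ennreal v" "0 \<le> v" by (rule reservation_value_real)
  obtain g1 where g1: "expected_max (ennreal y) = ennreal g1" "0 \<le> g1"
    using expected_max_real[of "ennreal y"] by auto
  show ?thesis
  proof (cases "y \<le> v")
    case True
    obtain g2 where g2: "expected_max reservation_value = ennreal g2" "0 \<le> g2"
      using expected_max_real[of reservation_value] v by auto
    have "ennreal v = ennreal (\<delta> * g2)"
      using reservation_value_fixpoint g2 discount_pos v by (simp add: ennreal_mult)
    then have "v = \<delta> * g2" using v g2 discount_pos by (subst (asm) ennreal_inj) auto
    moreover have
      "ennreal y + expected_max reservation_value \<le> expected_max (ennreal y) + reservation_value"
      using True v by (intro expected_max_exchange) (simp add: ennreal_leI)
    then have "y + g2 \<le> g1 + v"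
      using g1 g2 v y by (simp add: ennreal_plus[symmetric] del: ennreal_plus)
    ultimately show ?thesis using True v g2
      by (intro quarter_bound_subsolution_of_real[OF y g1, of v g2] quarter_bound_ineq_below y)
        (simp_all add: optimal_bound_def max_def)
  next
    case False
    have "ennreal y \<le> ennreal g1" using expected_max_ge[of "ennreal y"] g1 by simp
    then have "y \<le> g1" using g1 by (simp add: ennreal_le_iff)
    then show ?thesis using False v y g1
      by (intro quarter_bound_subsolution_of_real[OF y g1, of y g1] quarter_bound_ineq_above)
        (simp_all add: optimal_bound_def max_def ennreal_le_iff)
  qed
qed

lemma quarter_bound_le_iterate:
  assumes v: "reservation_value = ennreal v" "0 \<le> v"
  shows "0 \<le> y \<Longrightarrow> quarter_bound y \<le> pbar_value y + ennreal (cont_discount ^ N * v)"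
proof (induction N arbitrary: y)
  case 0
  have "quarter_bound y \<le> ennreal (1/4) * (ennreal y + (ennreal y + ennreal v))"
    unfolding quarter_bound_def using optimal_bound_le[of y] v
    by (intro mult_left_mono add_left_mono) auto
  also have "\<dots> = ennreal (y / 2 + v / 4)"
    using 0 v by (simp add: ennreal_mult[symmetric] ennreal_plus[symmetric] del: ennreal_plus)
  also have "\<dots> \<le> ennreal (y / 2) + ennreal v"
    using 0 v by (simp add: ennreal_plus[symmetric] del: ennreal_plus)
  also have "\<dots> \<le> pbar_value y + ennreal v"
    using pbar_value_ge_half[OF 0] by (rule add_right_mono)
  finally show ?case by simp
next
  case (Suc N)
  let ?e = "ennreal (cont_discount ^ N * v)"
  have "quarter_bound y
      \<le> ennreal stop_prob * ennreal y + ennreal cont_discount * (\<integral>\<^sup>+x. quarter_bound (max y x) \<partial>F)"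
    by (rule quarter_bound_subsolution[OF Suc.prems])
  also have "\<dots> \<le> ennreal stop_prob * ennreal y
      + ennreal cont_discount * (\<integral>\<^sup>+x. pbar_value (max y x) + ?e \<partial>F)"
    using Suc.prems by (intro add_left_mono mult_left_mono nn_integral_mono Suc.IH) auto
  also have "(\<integral>\<^sup>+x. pbar_value (max y x) + ?e \<partial>F) = (\<integral>\<^sup>+x. pbar_value (max y x) \<partial>F) + ?e"
    by (subst nn_integral_add) (auto simp: emeasure_space_1)
  also have "ennreal stop_prob * ennreal y
      + ennreal cont_discount * ((\<integral>\<^sup>+x. pbar_value (max y x) \<partial>F) + ?e)
      = pbar_value y + ennreal cont_discount * ?e"
    by (subst pbar_value_rec[of y]) (simp add: distrib_left add.assoc)
  also have "ennreal cont_discount * ?e = ennreal (cont_discount ^ Suc N * v)"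
    using stop_prob_cont_discount v by (simp add: ennreal_mult[symmetric] mult.assoc)
  finally show ?case .
qed

lemma quarter_bound_le_pbar_value: assumes "0 \<le> y" shows "quarter_bound y \<le> pbar_value y"
proof -
  obtain v where v: "reservation_value = ennreal v" "0 \<le> v" by (rule reservation_value_real)
  have "(\<lambda>N. cont_discount ^ N * v) \<longlonglongrightarrow> 0 * v"
    using stop_prob_cont_discount(4,5) by (intro tendsto_mult LIMSEQ_power_zero tendsto_const) auto
  then have "(\<lambda>N. pbar_value y + ennreal (cont_discount ^ N * v)) \<longlonglongrightarrow> pbar_value y + ennreal 0"
    by (intro tendsto_add tendsto_const tendsto_ennrealI) simp
  then show ?thesis
    using quarter_bound_le_iterate[OF v assms] by (intro LIMSEQ_le_const) auto
qed

lemma U_env_pbar_ge_quarter: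
  assumes "h \<noteq> []" "0 \<le> best_so_far h"
  shows "ennreal (1/4) * optimal_bound (best_so_far h) \<le> U_env \<delta> (\<lambda>_. stop_prob) F h"
proof -
  have "ennreal (1/4) * optimal_bound (best_so_far h) \<le> quarter_bound (best_so_far h)"
    unfolding quarter_bound_def by (intro mult_left_mono add_increasing) auto
  also have "\<dots> \<le> pbar_value (best_so_far h)" by (rule quarter_bound_le_pbar_value[OF assms(2)])
  finally show ?thesis using U_env_pbar[OF assms(1)] by simp
qed

end

section \<open>From environments to priors\<close>

lemma posterior_pos:
  assumes fin: "finite (set_pmf \<mu>)" and lik: "\<And>G. G \<in> set_pmf \<mu> \<Longrightarrow> likelihood G h > 0"
    and F: "F \<in> set_pmf \<mu>"
  shows "posterior \<mu> h F > 0"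
proof -
  have "(\<Sum>G\<in>set_pmf \<mu>. pmf \<mu> G * likelihood G h) > 0"
    using fin F lik by (intro sum_pos) (auto simp: pmf_positive)
  then show ?thesis unfolding posterior_def using lik[OF F] F by (simp add: pmf_positive)
qed

lemma prior_ratio_ge:
  assumes fin: "finite (set_pmf \<mu>)" and lik: "\<And>F. F \<in> set_pmf \<mu> \<Longrightarrow> likelihood F h > 0"
    and upper: "\<And>F p. F \<in> set_pmf \<mu> \<Longrightarrow> p \<in> decision_rules \<Longrightarrow> U_env \<delta> p F h \<le> B F"
    and lower: "\<And>F. F \<in> set_pmf \<mu> \<Longrightarrow> c * B F \<le> U_env \<delta> q F h"
    and B: "\<And>F. F \<in> set_pmf \<mu> \<Longrightarrow> 0 < B F \<and> B F < top"
  shows "c \<le> U_prior \<delta> q \<mu> h / V_prior \<delta> \<mu> h"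
proof (rule ennreal_le_divide_of_bound)
  let ?K = "\<Sum>F\<in>set_pmf \<mu>. ennreal (posterior \<mu> h F) * B F"
  show "V_prior \<delta> \<mu> h \<le> ?K"
    unfolding V_prior_def U_prior_def
    by (intro SUP_least sum_mono mult_left_mono upper) auto
  show "c * ?K \<le> U_prior \<delta> q \<mu> h"
    unfolding U_prior_def sum_distrib_left
    by (intro sum_mono) (metis lower mult.left_commute mult_left_mono zero_le)
  obtain F where F: "F \<in> set_pmf \<mu>" using set_pmf_not_empty[of \<mu>] by blast
  have "0 < ennreal (posterior \<mu> h F) * B F"
    using posterior_pos[OF fin lik F] B[OF F] by (simp add: ennreal_zero_less_mult_iff)
  also have "\<dots> \<le> ?K" by (rule member_le_sum[OF F _ fin]) simp
  finally show "0 < ?K" .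
  show "?K < top" using fin B by (auto simp: ennreal_mult_less_top)
qed

lemma perf_ratio_pbar_ge_quarter:
  assumes "0 < \<delta>" "\<delta> < 1" "x0 > 0"
  shows "1/4 \<le> perf_ratio \<delta> X x0 (envs X) (\<lambda>_. (1 - \<delta>) / (2 - \<delta>))"
  unfolding perf_ratio_def
proof (intro INF_greatest)
  fix h \<mu> assume h: "h \<in> histories X x0" and \<mu>: "\<mu> \<in> priors (consistent_envs (envs X) h)"
  have h_ne: "h \<noteq> []" and y_pos: "0 < best_so_far h"
    using h hd_le_best_so_far assms(3) by (auto simp: histories_def intro: less_le_trans)
  have env: "search_env F \<delta>" and lik: "likelihood F h > 0" if "F \<in> set_pmf \<mu>" for F
    using \<mu> that assms by (auto simp: priors_def consistent_envs_def intro: envs_search_env)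
  show "1/4 \<le> U_prior \<delta> (\<lambda>_. (1 - \<delta>) / (2 - \<delta>)) \<mu> h / V_prior \<delta> \<mu> h"
  proof (rule prior_ratio_ge[where B = "\<lambda>F. search_env.optimal_bound F \<delta> (best_so_far h)"])
    show "finite (set_pmf \<mu>)" using \<mu> by (simp add: priors_def)
    fix F assume F: "F \<in> set_pmf \<mu>"
    interpret search_env F \<delta> by (rule env[OF F])
    show "likelihood F h > 0" by (rule lik[OF F])
    show "U_env \<delta> p F h \<le> optimal_bound (best_so_far h)" if "p \<in> decision_rules" for p
      using U_env_le_optimal_bound[OF that h_ne] .
    show "1/4 * optimal_bound (best_so_far h) \<le> U_env \<delta> (\<lambda>_. (1 - \<delta>) / (2 - \<delta>)) F h"
      using U_env_pbar_ge_quarter[OF h_ne] y_pos by (simp add: stop_prob_def ennreal_quarter)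
    show "0 < optimal_bound (best_so_far h) \<and> optimal_bound (best_so_far h) < top"
      using optimal_bound_ge(1)[of "best_so_far h"] y_pos optimal_bound_finite
      by (metis ennreal_less_zero_iff order_less_le_trans)
  qed
qed

section \<open>Finitely supported environments\<close>

definition env_of_pmf :: "real pmf \<Rightarrow> real measure" where
  "env_of_pmf P = distr (measure_pmf P) borel (\<lambda>x. x)"

lemma sets_env_of_pmf [simp, measurable_cong]: "sets (env_of_pmf P) = sets borel"
  by (simp add: env_of_pmf_def)

lemma emeasure_env_of_pmf_singleton: "emeasure (env_of_pmf P) {x} = ennreal (pmf P x)"
  unfolding env_of_pmf_def by (subst emeasure_distr) (auto simp: emeasure_pmf_single)

lemma nn_integral_env_of_pmf:
  assumes fin: "finite (set_pmf P)"
  shows "(\<integral>\<^sup>+x. f x \<partial>env_of_pmf P) = (\<Sum>s\<in>set_pmf P. ennreal (pmf P s) * f s)"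
proof -
  let ?S = "set_pmf P"
  have "?S \<in> sets borel" using fin by (simp add: finite_imp_closed borel_closed)
  then have "AE x in env_of_pmf P. x \<in> ?S"
    unfolding env_of_pmf_def by (subst AE_distr_iff) (auto simp: AE_measure_pmf)
  then have "AE x in env_of_pmf P. f x = (\<Sum>s\<in>?S. f s * indicator {s} x)"
    by eventually_elim (use fin in \<open>simp add: indicator_def if_distrib sum.delta'\<close>)
  then have "(\<integral>\<^sup>+x. f x \<partial>env_of_pmf P) = (\<integral>\<^sup>+x. (\<Sum>s\<in>?S. f s * indicator {s} x) \<partial>env_of_pmf P)"
    by (rule nn_integral_cong_AE)
  also have "\<dots> = (\<Sum>s\<in>?S. \<integral>\<^sup>+x. f s * indicator {s} x \<partial>env_of_pmf P)"
    by (rule nn_integral_sum) simp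
  also have "\<dots> = (\<Sum>s\<in>?S. f s * ennreal (pmf P s))"
    by (intro sum.cong refl) (simp add: nn_integral_cmult_indicator emeasure_env_of_pmf_singleton)
  finally show ?thesis by (simp add: mult.commute)
qed

lemma env_of_pmf_in_envs:
  assumes fin: "finite (set_pmf P)" and sub: "set_pmf P \<subseteq> X" and X: "X \<in> sets borel"
  shows "env_of_pmf P \<in> envs X"
proof -
  have "emeasure (env_of_pmf P) X = (\<Sum>s\<in>set_pmf P. ennreal (pmf P s) * indicator X s)"
    using X by (simp flip: nn_integral_env_of_pmf[OF fin])
  also have "\<dots> = 1"
    using sub fin by (simp add: indicator_def subset_iff sum_pmf_eq_1 cong: sum.cong)
  finally have "emeasure (env_of_pmf P) X = 1" .
  moreover have "prob_space (env_of_pmf P)" unfolding env_of_pmf_def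
    by (rule measure_pmf.prob_space_distr) simp
  moreover have "(\<integral>\<^sup>+x. ennreal x \<partial>env_of_pmf P) < \<infinity>"
    unfolding nn_integral_env_of_pmf[OF fin] using fin by (simp add: ennreal_mult_less_top)
  ultimately show ?thesis unfolding envs_def by auto
qed

lemma sum_ennreal_pmf: "finite (set_pmf P) \<Longrightarrow> (\<Sum>s\<in>set_pmf P. ennreal (pmf P s)) = 1"
  by (simp add: sum_pmf_eq_1)

lemma prod_list_pos: "(\<And>x. x \<in> set xs \<Longrightarrow> 0 < f x) \<Longrightarrow> 0 < (\<Prod>x\<leftarrow>xs. (f x :: real))"
  by (induction xs) auto

lemma likelihood_env_of_pmf_pos:
  assumes "set (tl h) \<subseteq> set_pmf P"
  shows "likelihood (env_of_pmf P) h > 0"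
  unfolding likelihood_def
proof (rule prod_list_pos)
  fix x assume "x \<in> set (tl h)"
  then have "pmf P x > 0" using assms by (auto simp: pmf_positive)
  then show "0 < measure (env_of_pmf P) {x}"
    by (simp add: measure_def emeasure_env_of_pmf_singleton)
qed

lemma stop_term_sum_env_of_pmf_Suc:
  assumes fin: "finite (set_pmf P)"
  shows "(\<Sum>n<Suc N. stop_term \<delta> p (env_of_pmf P) n h) = ennreal (p h) * ennreal (best_so_far h)
     + ennreal ((1 - p h) * \<delta>)
       * (\<Sum>s\<in>set_pmf P. ennreal (pmf P s) * (\<Sum>n<N. stop_term \<delta> p (env_of_pmf P) n (h @ [s])))"
proof -
  have "(\<Sum>n<Suc N. stop_term \<delta> p (env_of_pmf P) n h)
      = stop_term \<delta> p (env_of_pmf P) 0 h + (\<Sum>n<N. stop_term \<delta> p (env_of_pmf P) (Suc n) h)"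
    by (rule sum.lessThan_Suc_shift)
  also have "(\<Sum>n<N. stop_term \<delta> p (env_of_pmf P) (Suc n) h) = ennreal ((1 - p h) * \<delta>)
      * (\<Sum>n<N. \<Sum>s\<in>set_pmf P. ennreal (pmf P s) * stop_term \<delta> p (env_of_pmf P) n (h @ [s]))"
    by (simp add: nn_integral_env_of_pmf[OF fin] sum_distrib_left)
  also have "(\<Sum>n<N. \<Sum>s\<in>set_pmf P. ennreal (pmf P s) * stop_term \<delta> p (env_of_pmf P) n (h @ [s]))
      = (\<Sum>s\<in>set_pmf P. ennreal (pmf P s) * (\<Sum>n<N. stop_term \<delta> p (env_of_pmf P) n (h @ [s])))"
    by (subst sum.swap) (simp add: sum_distrib_left)
  finally show ?thesis by simp
qed

lemma U_env_env_of_pmf_rec: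
  assumes fin: "finite (set_pmf P)"
  shows "U_env \<delta> p (env_of_pmf P) h = ennreal (p h) * ennreal (best_so_far h)
     + ennreal ((1 - p h) * \<delta>)
       * (\<Sum>s\<in>set_pmf P. ennreal (pmf P s) * U_env \<delta> p (env_of_pmf P) (h @ [s]))"
proof -
  let ?st = "\<lambda>n h. stop_term \<delta> p (env_of_pmf P) n h"
  have "(\<lambda>n. ?st (Suc n) h) sums (\<Sum>n. ?st (Suc n) h)" by (rule summable_sums) simp
  then have "(\<lambda>n. ?st n h) sums ((\<Sum>n. ?st (Suc n) h) + ?st 0 h)" by (rule sums_Suc)
  then have "U_env \<delta> p (env_of_pmf P) h = (\<Sum>n. ?st (Suc n) h) + ?st 0 h"
    unfolding U_env_def by (rule sums_unique[symmetric])
  also have "(\<Sum>n. ?st (Suc n) h)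
      = ennreal ((1 - p h) * \<delta>) * (\<Sum>n. \<Sum>s\<in>set_pmf P. ennreal (pmf P s) * ?st n (h @ [s]))"
    by (simp add: nn_integral_env_of_pmf[OF fin])
  also have "(\<Sum>n. \<Sum>s\<in>set_pmf P. ennreal (pmf P s) * ?st n (h @ [s]))
      = (\<Sum>s\<in>set_pmf P. ennreal (pmf P s) * U_env \<delta> p (env_of_pmf P) (h @ [s]))"
    unfolding U_env_def by (subst suminf_sum) simp_all
  finally show ?thesis by (simp add: add.commute)
qed

lemma U_env_env_of_pmf_le:
  assumes fin: "finite (set_pmf P)" and p: "p \<in> decision_rules" and "0 < \<delta>" "\<delta> < 1"
    and M: "\<forall>s\<in>set_pmf P. s \<le> M" "0 \<le> M" and h: "best_so_far h \<le> M" "h \<noteq> []"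
  shows "U_env \<delta> p (env_of_pmf P) h \<le> ennreal M"
proof -
  have "(\<Sum>n<N. stop_term \<delta> p (env_of_pmf P) n h) \<le> ennreal M"
    if "best_so_far h \<le> M" "h \<noteq> []" for N h
  using that proof (induction N arbitrary: h)
    case (Suc N)
    have p01: "0 \<le> p h" "p h \<le> 1" using decision_rulesD[OF p] by auto
    have "(\<Sum>n<Suc N. stop_term \<delta> p (env_of_pmf P) n h) \<le> ennreal (p h) * ennreal M
       + ennreal ((1 - p h) * \<delta>) * (\<Sum>s\<in>set_pmf P. ennreal (pmf P s) * ennreal M)"
      unfolding stop_term_sum_env_of_pmf_Suc[OF fin] using Suc.prems M
      by (intro add_mono mult_left_mono sum_mono Suc.IH ennreal_leI) (auto simp: best_so_far_snoc)
    also have "\<dots> = ennreal (p h * M + (1 - p h) * \<delta> * M)"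
      using p01 assms(3,4) M sum_ennreal_pmf[OF fin]
      by (simp add: sum_distrib_right[symmetric] ennreal_mult ennreal_plus del: sum_ennreal)
    also have "\<dots> \<le> ennreal M"
    proof (rule ennreal_leI)
      have "0 \<le> M * ((1 - \<delta>) * (1 - p h))" using p01 assms(4) M by simp
      then show "p h * M + (1 - p h) * \<delta> * M \<le> M" by (simp add: algebra_simps)
    qed
    finally show ?case .
  qed simp
  then show ?thesis
    unfolding U_env_def using h by (intro ennreal_suminf_bound_add[where y=0, simplified])
qed

lemma enn2real_add_mult_sum:
  assumes "0 \<le> a" "0 \<le> b" "0 \<le> c" "\<forall>s\<in>S. 0 \<le> w s" "\<forall>s\<in>S. f s < top"
  shows "enn2real (ennreal a * ennreal b + ennreal c * (\<Sum>s\<in>S. ennreal (w s) * f s))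
       = a * b + c * (\<Sum>s\<in>S. w s * enn2real (f s))"
proof -
  have "(\<Sum>s\<in>S. ennreal (w s) * f s) = (\<Sum>s\<in>S. ennreal (w s * enn2real (f s)))"
    using assms(4,5)
    by (intro sum.cong refl) (simp add: ennreal_mult ennreal_enn2real less_top[symmetric])
  also have "\<dots> = ennreal (\<Sum>s\<in>S. w s * enn2real (f s))"
    using assms(4) by (intro sum_ennreal) (simp add: enn2real_nonneg)
  finally have "ennreal a * ennreal b + ennreal c * (\<Sum>s\<in>S. ennreal (w s) * f s)
      = ennreal (a * b + c * (\<Sum>s\<in>S. w s * enn2real (f s)))"
    using assms by (simp add: ennreal_mult ennreal_plus sum_nonneg enn2real_nonneg)
  moreover have "0 \<le> a * b + c * (\<Sum>s\<in>S. w s * enn2real (f s))"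
    using assms by (simp add: sum_nonneg enn2real_nonneg)
  ultimately show ?thesis by simp
qed

locale finite_env =
  fixes \<delta> :: real and p :: "real list \<Rightarrow> real" and P :: "real pmf"
  assumes discount_pos: "0 < \<delta>" and discount_less_1: "\<delta> < 1"
    and rule: "p \<in> decision_rules" and finite_support: "finite (set_pmf P)"
begin

text \<open>Real-valued payoffs, so that the recursions below can be manipulated with field arithmetic.\<close>
definition payoff :: "real list \<Rightarrow> real" where
  "payoff h = enn2real (U_env \<delta> p (env_of_pmf P) h)"

definition partial_payoff :: "nat \<Rightarrow> real list \<Rightarrow> real" where
  "partial_payoff N h = enn2real (\<Sum>n<N. stop_term \<delta> p (env_of_pmf P) n h)"

lemma rule_bounds: "0 \<le> p h" "p h \<le> 1"
  using decision_rulesD[OF rule] by auto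

lemma U_env_le:
  assumes "\<forall>s\<in>set_pmf P. s \<le> M" "best_so_far h \<le> M" "0 \<le> best_so_far h" "h \<noteq> []"
  shows "U_env \<delta> p (env_of_pmf P) h \<le> ennreal M"
  by (rule U_env_env_of_pmf_le[OF finite_support rule discount_pos discount_less_1 assms(1) _
        assms(2,4)])
    (use assms(2,3) in linarith)

lemma U_env_finite:
  assumes "h \<noteq> []" "0 \<le> best_so_far h"
  shows "U_env \<delta> p (env_of_pmf P) h < top"
proof -
  let ?M = "max (best_so_far h) (Max (set_pmf P))"
  have "\<forall>s\<in>set_pmf P. s \<le> ?M" using finite_support by (auto intro: max.coboundedI2)
  then have "U_env \<delta> p (env_of_pmf P) h \<le> ennreal ?M" using assms by (intro U_env_le) auto
  then show ?thesis using le_less_trans ennreal_less_top by blast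
qed

lemma stop_term_sum_le_U_env:
  "(\<Sum>n<N. stop_term \<delta> p (env_of_pmf P) n h) \<le> U_env \<delta> p (env_of_pmf P) h"
  unfolding U_env_def by (rule sum_le_suminf) auto

lemma U_env_eq_payoff:
  "h \<noteq> [] \<Longrightarrow> 0 \<le> best_so_far h \<Longrightarrow> U_env \<delta> p (env_of_pmf P) h = ennreal (payoff h)"
  unfolding payoff_def using U_env_finite by (simp add: ennreal_enn2real less_top)

lemma stop_term_sum_finite:
  "h \<noteq> [] \<Longrightarrow> 0 \<le> best_so_far h \<Longrightarrow> (\<Sum>n<N. stop_term \<delta> p (env_of_pmf P) n h) < top"
  using stop_term_sum_le_U_env U_env_finite le_less_trans by blast

lemma payoff_nonneg: "0 \<le> payoff h"
  unfolding payoff_def by (simp add: enn2real_nonneg)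

lemma partial_payoff_le_payoff: "h \<noteq> [] \<Longrightarrow> 0 \<le> best_so_far h \<Longrightarrow> partial_payoff N h \<le> payoff h"
  unfolding payoff_def partial_payoff_def using stop_term_sum_le_U_env U_env_finite
  by (intro enn2real_mono) (auto simp: less_top)

lemma payoff_le:
  "\<forall>s\<in>set_pmf P. s \<le> M \<Longrightarrow> h \<noteq> [] \<Longrightarrow> 0 \<le> best_so_far h \<Longrightarrow> best_so_far h \<le> M \<Longrightarrow> payoff h \<le> M"
  using U_env_le[of M h] U_env_eq_payoff[of h] by (simp add: ennreal_le_iff)

lemma payoff_rec:
  assumes "h \<noteq> []" "0 \<le> best_so_far h"
  shows "payoff h
    = p h * best_so_far h + (1 - p h) * \<delta> * (\<Sum>s\<in>set_pmf P. pmf P s * payoff (h @ [s]))"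
  unfolding payoff_def
  using rule_bounds[of h] discount_pos discount_less_1 assms
  by (subst U_env_env_of_pmf_rec[OF finite_support], intro enn2real_add_mult_sum)
    (auto intro!: U_env_finite simp: best_so_far_snoc)

lemma partial_payoff_0: "partial_payoff 0 h = 0"
  unfolding partial_payoff_def by simp

lemma partial_payoff_Suc:
  assumes "h \<noteq> []" "0 \<le> best_so_far h"
  shows "partial_payoff (Suc N) h
    = p h * best_so_far h + (1 - p h) * \<delta> * (\<Sum>s\<in>set_pmf P. pmf P s * partial_payoff N (h @ [s]))"
  unfolding partial_payoff_def stop_term_sum_env_of_pmf_Suc[OF finite_support]
  using rule_bounds[of h] discount_pos discount_less_1 assms
  by (intro enn2real_add_mult_sum)
    (auto intro!: stop_term_sum_finite simp: best_so_far_snoc simp del: ennreal_sum_less_top)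

lemma U_env_le_of_partial_payoff:
  assumes "h \<noteq> []" "0 \<le> best_so_far h" "\<And>N. partial_payoff N h \<le> B"
  shows "U_env \<delta> p (env_of_pmf P) h \<le> ennreal B"
  unfolding U_env_def
proof (rule ennreal_suminf_bound_add[where y=0, simplified])
  fix N
  have "(\<Sum>n<N. stop_term \<delta> p (env_of_pmf P) n h) = ennreal (partial_payoff N h)"
    unfolding partial_payoff_def using stop_term_sum_finite[OF assms(1,2)]
    by (simp add: ennreal_enn2real less_top)
  then show "(\<Sum>n<N. stop_term \<delta> p (env_of_pmf P) n h) \<le> ennreal B"
    using assms(3) by (simp add: ennreal_leI)
qed

end

lemma sum_pmf_mult_mono:
  "(\<And>s. s \<in> set_pmf P \<Longrightarrow> f s \<le> (g s :: real))
    \<Longrightarrow> (\<Sum>s\<in>set_pmf P. pmf P s * f s) \<le> (\<Sum>s\<in>set_pmf P. pmf P s * g s)"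
  by (intro sum_mono mult_left_mono) auto

lemma sum_pmf_mult_const: "finite (set_pmf P) \<Longrightarrow> (\<Sum>s\<in>set_pmf P. pmf P s * c) = (c :: real)"
  by (simp add: sum_distrib_right[symmetric] sum_pmf_eq_1)

section \<open>Adding a distant atom\<close>

definition add_atom :: "real \<Rightarrow> real \<Rightarrow> real pmf \<Rightarrow> real pmf" where
  "add_atom \<epsilon> L P = embed_pmf (\<lambda>x. if x = L then \<epsilon> else (1 - \<epsilon>) * pmf P x)"

context
  fixes \<epsilon> L :: real and P :: "real pmf"
  assumes eps: "0 < \<epsilon>" "\<epsilon> < 1" and atom_new: "L \<notin> set_pmf P" and fin: "finite (set_pmf P)"
begin

lemma pmf_add_atom: "pmf (add_atom \<epsilon> L P) x = (if x = L then \<epsilon> else (1 - \<epsilon>) * pmf P x)"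
proof -
  define f where "f = (\<lambda>x. if x = L then \<epsilon> else (1 - \<epsilon>) * pmf P x)"
  have nonneg: "\<And>x. 0 \<le> f x" using eps by (auto simp: f_def)
  have "(\<integral>\<^sup>+x. ennreal (f x) \<partial>count_space UNIV) = (\<Sum>x\<in>insert L (set_pmf P). ennreal (f x))"
    using fin by (intro nn_integral_count_space') (auto simp: f_def set_pmf_eq)
  also have "\<dots> = ennreal (\<Sum>x\<in>insert L (set_pmf P). f x)"
    using nonneg by (simp del: sum.insert)
  also have "(\<Sum>x\<in>insert L (set_pmf P). f x) = \<epsilon> + (\<Sum>x\<in>set_pmf P. (1 - \<epsilon>) * pmf P x)"
    using fin atom_new by (simp add: f_def) (intro sum.cong, auto)
  also have "\<dots> = 1" using fin by (simp add: sum_distrib_left[symmetric] sum_pmf_eq_1)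
  finally have "(\<integral>\<^sup>+x. ennreal (f x) \<partial>count_space UNIV) = 1" by simp
  then have "pmf (add_atom \<epsilon> L P) x = f x"
    unfolding add_atom_def f_def[symmetric] by (intro pmf_embed_pmf nonneg)
  then show ?thesis by (simp add: f_def)
qed

lemma set_pmf_add_atom: "set_pmf (add_atom \<epsilon> L P) = insert L (set_pmf P)"
  using eps by (auto simp: set_pmf_eq pmf_add_atom)

lemma finite_set_pmf_add_atom: "finite (set_pmf (add_atom \<epsilon> L P))"
  using fin by (simp add: set_pmf_add_atom)

lemma sum_pmf_add_atom:
  "(\<Sum>s\<in>set_pmf (add_atom \<epsilon> L P). pmf (add_atom \<epsilon> L P) s * g s)
     = \<epsilon> * g L + (1 - \<epsilon>) * (\<Sum>s\<in>set_pmf P. pmf P s * g s)"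
proof -
  have "(\<Sum>s\<in>set_pmf P. pmf (add_atom \<epsilon> L P) s * g s) = (\<Sum>s\<in>set_pmf P. (1 - \<epsilon>) * (pmf P s * g s))"
    using atom_new by (intro sum.cong) (auto simp: pmf_add_atom)
  then show ?thesis
    using fin atom_new by (simp add: set_pmf_add_atom pmf_add_atom sum_distrib_left)
qed

end

lemma add_atom_step_ineq:
  fixes q \<delta> \<epsilon> y K S L A \<sigma> \<beta> :: real
  assumes q: "0 \<le> q" "q \<le> 1" and \<delta>: "0 < \<delta>" and eps: "0 < \<epsilon>" "\<epsilon> < 1" and y: "0 < y"
    and K: "0 \<le> K" "K * (1 - \<delta>) = \<delta> * \<epsilon> * L * A"
    and \<beta>: "0 \<le> \<beta>" "\<beta> \<le> y" and S: "S \<le> L * A" and \<sigma>: "y * \<sigma> + K * \<beta> \<le> y * \<beta> + K * y"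
  shows "y * (q * y + (1 - q) * \<delta> * (\<epsilon> * S + (1 - \<epsilon>) * \<sigma>)) + K * (q * y + (1 - q) * \<delta> * \<beta>)
      \<le> y * (q * y + (1 - q) * \<delta> * \<beta>) + K * y"
proof -
  define c where "c = (1 - q) * \<delta>"
  have c: "0 \<le> c" using q \<delta> by (simp add: c_def)
  have "y * (q * y + c * (\<epsilon> * S + (1 - \<epsilon>) * \<sigma>)) + K * (q * y + c * \<beta>)
      = q * y * y + c * \<epsilon> * y * S + c * (1 - \<epsilon>) * (y * \<sigma>) + K * q * y + K * c * \<beta>"
    by (simp add: algebra_simps)
  also have "\<dots> \<le> q * y * y + c * \<epsilon> * y * (L * A) + c * (1 - \<epsilon>) * (y * \<beta> + K * y - K * \<beta>)
      + K * q * y + K * c * \<beta>"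
    using c eps y S \<sigma> by (intro add_mono mult_left_mono order_refl) auto
  also have "c * \<epsilon> * y * (L * A) = (1 - q) * y * (K * (1 - \<delta>))"
    unfolding K(2) c_def by (simp add: algebra_simps)
  also have "q * y * y + (1 - q) * y * (K * (1 - \<delta>)) + c * (1 - \<epsilon>) * (y * \<beta> + K * y - K * \<beta>)
      + K * q * y + K * c * \<beta> = y * (q * y + c * \<beta>) + K * y - c * \<epsilon> * (K * (y - \<beta>) + y * \<beta>)"
    unfolding c_def by (simp add: algebra_simps)
  also have "\<dots> \<le> y * (q * y + c * \<beta>) + K * y"
    using c eps K \<beta> y by simp
  finally show ?thesis unfolding c_def .
qed

context
  fixes \<delta> \<epsilon> L y A :: real and p :: "real list \<Rightarrow> real" and P :: "real pmf"
  assumes \<delta>: "0 < \<delta>" "\<delta> < 1" and p: "p \<in> decision_rules" and fin: "finite (set_pmf P)"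
    and eps: "0 < \<epsilon>" "\<epsilon> < 1" and below: "\<forall>s\<in>set_pmf P. s \<le> y"
    and y: "0 < y" "y < L" and A: "0 \<le> A"
begin

interpretation P: finite_env \<delta> p P
  using \<delta> p fin by unfold_locales

interpretation P': finite_env \<delta> p "add_atom \<epsilon> L P"
  using \<delta> p finite_set_pmf_add_atom[OF eps _ fin] below y by unfold_locales force+

lemma partial_payoff_snoc_atom_le:
  assumes "U_env \<delta> p (env_of_pmf (add_atom \<epsilon> L P)) (h @ [L]) \<le> ennreal (L * A)"
    and "0 \<le> best_so_far h" "h \<noteq> []"
  shows "P'.partial_payoff N (h @ [L]) \<le> L * A"
proof -
  have hL: "h @ [L] \<noteq> []" "0 \<le> best_so_far (h @ [L])"
    using assms(2,3) by (auto simp: best_so_far_snoc)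
  have "ennreal (P'.payoff (h @ [L])) \<le> ennreal (L * A)"
    using assms(1) P'.U_env_eq_payoff[OF hL] by simp
  then show ?thesis
    using P'.partial_payoff_le_payoff[OF hL, of N] y A by (simp add: ennreal_le_iff)
qed

text \<open>Dividing by y, the invariant says that p earns at most a y + K (1 - a) in the perturbed
  environment, where a is its payoff ratio in P: the atom at L is worth at most L A once reached.\<close>
lemma partial_payoff_add_atom_le:
  assumes R_snoc: "\<And>h s. R h \<Longrightarrow> s \<in> set_pmf P \<Longrightarrow> R (h @ [s])"
    and atom: "\<And>h. R h \<Longrightarrow> h \<noteq> [] \<Longrightarrow> best_so_far h = y \<Longrightarrow>
                 U_env \<delta> p (env_of_pmf (add_atom \<epsilon> L P)) (h @ [L]) \<le> ennreal (L * A)"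
    and h: "R h" "h \<noteq> []" "best_so_far h = y"
  shows "y * P'.partial_payoff N h + (\<delta> * \<epsilon> * L * A / (1 - \<delta>)) * P.payoff h
      \<le> y * P.payoff h + (\<delta> * \<epsilon> * L * A / (1 - \<delta>)) * y"
proof -
  define K where "K = \<delta> * \<epsilon> * L * A / (1 - \<delta>)"
  have K: "0 \<le> K" "K * (1 - \<delta>) = \<delta> * \<epsilon> * L * A"
    unfolding K_def using \<delta> eps y A by simp_all
  have "y * P'.partial_payoff N h + K * P.payoff h \<le> y * P.payoff h + K * y"
    if "R h" "h \<noteq> []" "best_so_far h = y" for h
  using that proof (induction N arbitrary: h)
    case 0
    have "P.payoff h \<le> y" using P.payoff_le[of y h] 0 below y by simp
    then have "K * P.payoff h \<le> K * y" using K by (intro mult_left_mono) auto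
    moreover have "0 \<le> y * P.payoff h" using P.payoff_nonneg[of h] y by simp
    ultimately show ?case by (simp add: P'.partial_payoff_0)
  next
    case (Suc N)
    have L_new: "L \<notin> set_pmf P" using below y by force
    have hy: "0 \<le> best_so_far h" using Suc.prems y by simp
    have child: "R (h @ [s])" "h @ [s] \<noteq> []" "best_so_far (h @ [s]) = y" if "s \<in> set_pmf P" for s
      using that below Suc.prems R_snoc by (auto simp: best_so_far_snoc max_def)
    define \<sigma> where "\<sigma> = (\<Sum>s\<in>set_pmf P. pmf P s * P'.partial_payoff N (h @ [s]))"
    define \<beta> where "\<beta> = (\<Sum>s\<in>set_pmf P. pmf P s * P.payoff (h @ [s]))"
    have "(\<Sum>s\<in>set_pmf P. pmf P s * (y * P'.partial_payoff N (h @ [s]) + K * P.payoff (h @ [s])))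
        \<le> (\<Sum>s\<in>set_pmf P. pmf P s * (y * P.payoff (h @ [s]) + K * y))"
      using Suc.IH child by (intro sum_pmf_mult_mono) auto
    then have \<sigma>\<beta>: "y * \<sigma> + K * \<beta> \<le> y * \<beta> + K * y"
      using sum_pmf_mult_const[OF fin, of "K * y"]
      by (simp add: \<sigma>_def \<beta>_def algebra_simps sum.distrib sum_distrib_left)
    have "\<beta> \<le> (\<Sum>s\<in>set_pmf P. pmf P s * y)" unfolding \<beta>_def
      using child below y by (intro sum_pmf_mult_mono P.payoff_le) auto
    then have \<beta>: "0 \<le> \<beta>" "\<beta> \<le> y"
      using sum_pmf_mult_const[OF fin] by (auto simp: \<beta>_def P.payoff_nonneg intro: sum_nonneg)
    have "P'.partial_payoff N (h @ [L]) \<le> L * A"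
      using atom[OF Suc.prems] hy Suc.prems(2) by (rule partial_payoff_snoc_atom_le)
    then show ?case
      using add_atom_step_ineq[OF P.rule_bounds[of h] \<delta>(1) eps y(1) K \<beta> _ \<sigma>\<beta>] Suc.prems hy
      unfolding P'.partial_payoff_Suc[OF Suc.prems(2) hy] P.payoff_rec[OF Suc.prems(2) hy]
        sum_pmf_add_atom[OF eps L_new fin] \<sigma>_def[symmetric] \<beta>_def[symmetric]
      by simp
  qed
  then show ?thesis using h unfolding K_def .
qed

end

definition wait_rule :: "real \<Rightarrow> real list \<Rightarrow> real" where
  "wait_rule L h = (if L \<le> best_so_far h then 1 else 0)"

lemma wait_rule_in_decision_rules: "wait_rule L \<in> decision_rules"
  unfolding decision_rules_def wait_rule_def by auto

context
  fixes \<delta> \<epsilon> L :: real and P :: "real pmf"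
  assumes \<delta>: "0 < \<delta>" "\<delta> < 1" and eps: "0 < \<epsilon>" "\<epsilon> < 1"
    and below: "\<forall>s\<in>set_pmf P. s < L" and fin: "finite (set_pmf P)"
begin

interpretation W: finite_env \<delta> "wait_rule L" "add_atom \<epsilon> L P"
  using \<delta> wait_rule_in_decision_rules finite_set_pmf_add_atom[OF eps _ fin] below
  by unfold_locales force+

lemma payoff_wait_rule_rec:
  assumes h: "h \<noteq> []" "0 \<le> best_so_far h" "best_so_far h < L"
  shows "W.payoff h = \<delta> * (\<epsilon> * L + (1 - \<epsilon>) * (\<Sum>s\<in>set_pmf P. pmf P s * W.payoff (h @ [s])))"
proof -
  have L_new: "L \<notin> set_pmf P" using below by force
  have hL: "h @ [L] \<noteq> []" "0 \<le> best_so_far (h @ [L])" "best_so_far (h @ [L]) = L"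
    using h by (auto simp: best_so_far_snoc)
  have "W.payoff (h @ [L]) = L"
    using W.payoff_rec[OF hL(1,2)] hL(3) by (simp add: wait_rule_def)
  then show ?thesis
    using h unfolding W.payoff_rec[OF h(1,2)] sum_pmf_add_atom[OF eps L_new fin]
    by (simp add: wait_rule_def)
qed

text \<open>The payoff of waiting is bounded below by its infimum m over all histories that have not
  reached L yet, and m satisfies m \<ge> \<delta> (\<epsilon> L + (1 - \<epsilon>) m).\<close>
lemma U_env_wait_rule_ge:
  assumes h: "h \<noteq> []" "0 \<le> best_so_far h" "best_so_far h < L"
  shows "ennreal (\<delta> * \<epsilon> * L / (1 - \<delta> + \<delta> * \<epsilon>))
    \<le> U_env \<delta> (wait_rule L) (env_of_pmf (add_atom \<epsilon> L P)) h"
proof -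
  define J where "J = {h'. h' \<noteq> [] \<and> 0 \<le> best_so_far h' \<and> best_so_far h' < L}"
  define m where "m = Inf (W.payoff ` J)"
  have bdd: "bdd_below (W.payoff ` J)" by (rule bdd_belowI[of _ 0]) (auto simp: W.payoff_nonneg)
  have hJ: "h \<in> J" using h by (simp add: J_def)
  have J_snoc: "h' @ [s] \<in> J" if "h' \<in> J" "s \<in> set_pmf P" for h' s
    using that below by (auto simp: J_def best_so_far_snoc)
  have "\<delta> * (\<epsilon> * L + (1 - \<epsilon>) * m) \<le> W.payoff h'" if h': "h' \<in> J" for h'
  proof -
    have "m \<le> (\<Sum>s\<in>set_pmf P. pmf P s * W.payoff (h' @ [s]))"
      using sum_pmf_mult_mono[of P "\<lambda>_. m" "\<lambda>s. W.payoff (h' @ [s])"]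
        sum_pmf_mult_const[OF fin, of m]
        J_snoc[OF h'] bdd
      unfolding m_def by (simp add: cInf_lower)
    then have "\<delta> * (\<epsilon> * L + (1 - \<epsilon>) * m)
        \<le> \<delta> * (\<epsilon> * L + (1 - \<epsilon>) * (\<Sum>s\<in>set_pmf P. pmf P s * W.payoff (h' @ [s])))"
      using \<delta> eps by (intro mult_left_mono add_left_mono) auto
    then show ?thesis using payoff_wait_rule_rec h' by (simp add: J_def)
  qed
  then have "\<delta> * (\<epsilon> * L + (1 - \<epsilon>) * m) \<le> m"
    unfolding m_def using hJ by (intro cInf_greatest) (auto simp: m_def)
  then have "\<delta> * \<epsilon> * L \<le> m * (1 - \<delta> + \<delta> * \<epsilon>)" by (simp add: algebra_simps)
  moreover have "0 < 1 - \<delta> + \<delta> * \<epsilon>" using \<delta> eps by (smt (verit) mult_pos_pos)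
  ultimately have "\<delta> * \<epsilon> * L / (1 - \<delta> + \<delta> * \<epsilon>) \<le> m" by (simp add: divide_le_eq)
  also have "m \<le> W.payoff h" unfolding m_def using bdd hJ by (intro cInf_lower) auto
  finally show ?thesis using W.U_env_eq_payoff[OF h(1,2)] by (simp add: ennreal_leI)
qed

end

lemma mult_one_minus_le_quarter:
  fixes A a \<eta> :: real
  assumes "0 \<le> A" "A \<le> 1" "0 < \<eta>" "A - \<eta> \<le> a"
  shows "A * (1 - a) \<le> 1/4 + \<eta>"
proof -
  have "A * (1 - a) \<le> A * (1 - A + \<eta>)" using assms by (intro mult_left_mono) auto
  also have "\<dots> = 1/4 - (A - 1/2)\<^sup>2 + A * \<eta>" by (simp add: power2_eq_square algebra_simps)
  also have "A * \<eta> \<le> 1 * \<eta>" using assms by (intro mult_right_mono) auto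
  finally show ?thesis using zero_le_power2[of "A - 1/2"] by linarith
qed

text \<open>With D = 1 - \<delta> + \<delta> \<epsilon>, the waiting payoff is \<delta> \<epsilon> L / D and D / (1 - \<delta>) \<le> 1 + \<eta>;
  a huge L makes the term a y negligible.\<close>
lemma add_atom_ratio_ineq:
  fixes \<delta> \<epsilon> \<eta> y L A a :: real
  assumes \<delta>: "0 < \<delta>" "\<delta> < 1" and eps: "0 < \<epsilon>" "\<epsilon> < 1" "\<delta> * \<epsilon> \<le> \<eta> * (1 - \<delta>)"
    and \<eta>: "0 < \<eta>" and y: "0 < y" "y \<le> \<delta> * \<epsilon> * L * \<eta>"
    and A: "0 \<le> A" "A \<le> 1" and a: "0 \<le> a" "a \<le> 1" "A - \<eta> \<le> a"
  shows "a * y + (\<delta> * \<epsilon> * L * A / (1 - \<delta>)) * (1 - a)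
    \<le> (1/4 + 3 * \<eta>) * (\<delta> * \<epsilon> * L / (1 - \<delta> + \<delta> * \<epsilon>))"
proof -
  define D where "D = 1 - \<delta> + \<delta> * \<epsilon>"
  define Q where "Q = \<delta> * \<epsilon> * L"
  have Q: "0 < Q" using y \<eta> unfolding Q_def by (smt (verit) mult_nonpos_nonneg)
  have D: "0 < D" "D \<le> 1" unfolding D_def using \<delta> eps by (smt (verit) mult_pos_pos mult_left_le)+
  have "a * y * D \<le> 1 * y * 1" using a y D by (intro mult_mono) auto
  then have ay: "a * y * D \<le> Q * \<eta>" using y(2) unfolding Q_def by linarith
  have "A * (1 - a) * (D / (1 - \<delta>)) = A * (1 - a) + A * (1 - a) * (\<delta> * \<epsilon> / (1 - \<delta>))"
    unfolding D_def using \<delta> by (simp add: field_simps)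
  also have "A * (1 - a) * (\<delta> * \<epsilon> / (1 - \<delta>)) \<le> 1 * \<eta>"
    using A a \<delta> eps by (intro mult_mono) (auto simp: mult_le_one divide_le_eq)
  finally have Aa: "A * (1 - a) * (D / (1 - \<delta>)) \<le> 1/4 + 2 * \<eta>"
    using mult_one_minus_le_quarter[OF A \<eta> a(3)] by simp
  have "(a * y + (Q * A / (1 - \<delta>)) * (1 - a)) * D = a * y * D + Q * (A * (1 - a) * (D / (1 - \<delta>)))"
    by (simp add: algebra_simps)
  also have "\<dots> \<le> Q * \<eta> + Q * (1/4 + 2 * \<eta>)"
    using ay Aa Q by (intro add_mono mult_left_mono) auto
  finally have "(a * y + (Q * A / (1 - \<delta>)) * (1 - a)) * D \<le> (1/4 + 3 * \<eta>) * Q"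
    by (simp add: algebra_simps)
  then show ?thesis using D unfolding Q_def D_def by (simp add: le_divide_eq mult.assoc)
qed

section \<open>No rule does better than 1/4 when X is unbounded\<close>

definition situations :: "real set \<Rightarrow> real \<Rightarrow> (real list \<times> real pmf) set" where
  "situations X x0 = {(h, P). h \<in> histories X x0 \<and> finite (set_pmf P) \<and> set_pmf P \<subseteq> X
     \<and> set (tl h) \<subseteq> set_pmf P \<and> (\<forall>s\<in>set_pmf P. s \<le> best_so_far h)}"

definition payoff_ratio :: "real \<Rightarrow> (real list \<Rightarrow> real) \<Rightarrow> real list \<times> real pmf \<Rightarrow> real" where
  "payoff_ratio \<delta> p = (\<lambda>(h, P). finite_env.payoff \<delta> p P h / best_so_far h)"

definition sup_payoff_ratio :: "real \<Rightarrow> (real list \<Rightarrow> real) \<Rightarrow> real set \<Rightarrow> real \<Rightarrow> real" where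
  "sup_payoff_ratio \<delta> p X x0 = (SUP c\<in>situations X x0. payoff_ratio \<delta> p c)"

lemma situations_best_so_far_pos:
  "(h, P) \<in> situations X x0 \<Longrightarrow> 0 < x0 \<Longrightarrow> h \<noteq> [] \<and> 0 < best_so_far h"
  using hd_le_best_so_far by (fastforce simp: situations_def histories_def intro: less_le_trans)

lemma initial_situation: "0 \<in> X \<Longrightarrow> 0 \<le> x0 \<Longrightarrow> ([x0], return_pmf 0) \<in> situations X x0"
  by (auto simp: situations_def histories_def)

context
  fixes \<delta> :: real and p :: "real list \<Rightarrow> real" and X :: "real set" and x0 :: real
  assumes \<delta>: "0 < \<delta>" "\<delta> < 1" and p: "p \<in> decision_rules" and x0: "0 < x0"
begin

lemma payoff_ratio_bounds:
  assumes "c \<in> situations X x0"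
  shows "0 \<le> payoff_ratio \<delta> p c \<and> payoff_ratio \<delta> p c \<le> 1"
proof -
  obtain h P where c: "c = (h, P)" by fastforce
  have "finite (set_pmf P)" using assms by (simp add: c situations_def)
  then interpret P: finite_env \<delta> p P using \<delta> p by unfold_locales
  have "h \<noteq> []" "0 < best_so_far h" using situations_best_so_far_pos assms x0 c by auto
  then show ?thesis
    using P.payoff_le[of "best_so_far h" h] P.payoff_nonneg[of h] assms
    by (auto simp: c payoff_ratio_def situations_def divide_le_eq)
qed

lemma payoff_ratio_le_sup: "c \<in> situations X x0 \<Longrightarrow> payoff_ratio \<delta> p c \<le> sup_payoff_ratio \<delta> p X x0"
  unfolding sup_payoff_ratio_def using payoff_ratio_bounds
  by (intro cSUP_upper bdd_aboveI2[of _ _ 1]) auto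

lemma sup_payoff_ratio_bounds:
  assumes "0 \<in> X"
  shows "0 \<le> sup_payoff_ratio \<delta> p X x0" "sup_payoff_ratio \<delta> p X x0 \<le> 1"
proof -
  have c0: "([x0], return_pmf 0) \<in> situations X x0"
    using assms x0 by (intro initial_situation) auto
  show "0 \<le> sup_payoff_ratio \<delta> p X x0"
    using payoff_ratio_bounds[OF c0] payoff_ratio_le_sup[OF c0] by linarith
  show "sup_payoff_ratio \<delta> p X x0 \<le> 1"
    unfolding sup_payoff_ratio_def using c0 payoff_ratio_bounds by (intro cSUP_least) auto
qed

lemma U_env_snoc_atom_le:
  assumes hP: "(h, P) \<in> situations X x0" and L: "L \<in> X" "best_so_far h < L" and eps: "0 < \<epsilon>" "\<epsilon> < 1"
    and h': "h' \<in> histories X x0" "set (tl h') \<subseteq> set_pmf P" "h' \<noteq> []"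
      "best_so_far h' = best_so_far h"
  shows "U_env \<delta> p (env_of_pmf (add_atom \<epsilon> L P)) (h' @ [L])
    \<le> ennreal (L * sup_payoff_ratio \<delta> p X x0)"
proof -
  have fin: "finite (set_pmf P)" and below: "\<forall>s\<in>set_pmf P. s \<le> best_so_far h"
    using hP by (auto simp: situations_def)
  have L_new: "L \<notin> set_pmf P" using below L by force
  interpret P': finite_env \<delta> p "add_atom \<epsilon> L P"
    using \<delta> p finite_set_pmf_add_atom[OF eps L_new fin] by unfold_locales
  have L_pos: "0 < L" using situations_best_so_far_pos[OF hP x0] L by simp
  have hL: "h' @ [L] \<noteq> []" "best_so_far (h' @ [L]) = L" using h' L by (auto simp: best_so_far_snoc)
  have "(h' @ [L], add_atom \<epsilon> L P) \<in> situations X x0"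
    using h' hP hL L set_pmf_add_atom[OF eps L_new fin] below
    by (auto simp: situations_def histories_def)
  then have "payoff_ratio \<delta> p (h' @ [L], add_atom \<epsilon> L P) \<le> sup_payoff_ratio \<delta> p X x0"
    by (rule payoff_ratio_le_sup)
  then have "P'.payoff (h' @ [L]) \<le> L * sup_payoff_ratio \<delta> p X x0"
    using L_pos hL by (simp add: payoff_ratio_def divide_le_eq mult.commute)
  then show ?thesis using P'.U_env_eq_payoff[of "h' @ [L]"] hL L_pos by (simp add: ennreal_leI)
qed

lemma U_env_add_atom_le:
  assumes hP: "(h, P) \<in> situations X x0" and L: "L \<in> X" "best_so_far h < L" and eps: "0 < \<epsilon>" "\<epsilon> < 1"
    and "0 \<in> X"
  shows "U_env \<delta> p (env_of_pmf (add_atom \<epsilon> L P)) h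
    \<le> ennreal (payoff_ratio \<delta> p (h, P) * best_so_far h
        + (\<delta> * \<epsilon> * L * sup_payoff_ratio \<delta> p X x0 / (1 - \<delta>)) * (1 - payoff_ratio \<delta> p (h, P)))"
proof -
  let ?y = "best_so_far h" and ?a = "payoff_ratio \<delta> p (h, P)" and ?A = "sup_payoff_ratio \<delta> p X x0"
  define K where "K = \<delta> * \<epsilon> * L * ?A / (1 - \<delta>)"
  have fin: "finite (set_pmf P)" and below: "\<forall>s\<in>set_pmf P. s \<le> ?y"
    using hP by (auto simp: situations_def)
  have L_new: "L \<notin> set_pmf P" using below L by force
  interpret P: finite_env \<delta> p P using \<delta> p fin by unfold_locales
  interpret P': finite_env \<delta> p "add_atom \<epsilon> L P"
    using \<delta> p finite_set_pmf_add_atom[OF eps L_new fin] by unfold_locales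
  have h: "h \<noteq> []" "0 < ?y" using situations_best_so_far_pos[OF hP x0] by auto
  have payoff_h: "P.payoff h = ?a * ?y" using h by (simp add: payoff_ratio_def)
  show ?thesis unfolding K_def[symmetric]
  proof (rule P'.U_env_le_of_partial_payoff)
    fix N
    have "?y * P'.partial_payoff N h + K * P.payoff h \<le> ?y * P.payoff h + K * ?y"
      unfolding K_def using hP h
      by (intro partial_payoff_add_atom_le[OF \<delta> p fin eps below h(2) L(2)
            sup_payoff_ratio_bounds(1)[OF \<open>0 \<in> X\<close>],
            where R = "\<lambda>h'. h' \<in> histories X x0 \<and> set (tl h') \<subseteq> set_pmf P"]
          U_env_snoc_atom_le[OF hP L eps])
        (auto simp: situations_def histories_def)
    then have "?y * P'.partial_payoff N h \<le> ?y * (?a * ?y + K * (1 - ?a))"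
      unfolding payoff_h by (simp add: algebra_simps)
    then show "P'.partial_payoff N h \<le> ?a * ?y + K * (1 - ?a)" using h by simp
  qed (use h in auto)
qed

lemma add_atom_ratio_le:
  assumes \<eta>: "0 < \<eta>"
    and hP: "(h, P) \<in> situations X x0"
    and close: "sup_payoff_ratio \<delta> p X x0 - \<eta> \<le> payoff_ratio \<delta> p (h, P)"
    and eps: "0 < \<epsilon>" "\<epsilon> < 1" "\<delta> * \<epsilon> \<le> \<eta> * (1 - \<delta>)"
    and L: "L \<in> X" "best_so_far h < L" "best_so_far h \<le> \<delta> * \<epsilon> * L * \<eta>" and "0 \<in> X"
  shows "U_env \<delta> p (env_of_pmf (add_atom \<epsilon> L P)) h
      / (SUP q\<in>decision_rules. U_env \<delta> q (env_of_pmf (add_atom \<epsilon> L P)) h) \<le> ennreal (1/4 + 3 * \<eta>)"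
proof (rule divide_le_posI_ennreal)
  let ?F = "env_of_pmf (add_atom \<epsilon> L P)"
  let ?V = "SUP q\<in>decision_rules. U_env \<delta> q ?F h"
  let ?W = "\<delta> * \<epsilon> * L / (1 - \<delta> + \<delta> * \<epsilon>)"
  have y: "h \<noteq> []" "0 < best_so_far h" using situations_best_so_far_pos[OF hP x0] by auto
  have fin: "finite (set_pmf P)" and below: "\<forall>s\<in>set_pmf P. s < L"
    using hP L by (fastforce simp: situations_def)+
  have W: "0 < ?W" using \<delta> eps L y by (smt (verit) divide_pos_pos mult_pos_pos)
  have "ennreal ?W \<le> U_env \<delta> (wait_rule L) ?F h"
    using y L by (intro U_env_wait_rule_ge[OF \<delta> eps(1,2) below fin]) auto
  also have "\<dots> \<le> ?V" by (intro SUP_upper wait_rule_in_decision_rules)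
  finally have W_le: "ennreal ?W \<le> ?V" .
  then show "0 < ?V" using W by (metis ennreal_less_zero_iff order_less_le_trans)
  let ?a = "payoff_ratio \<delta> p (h, P)" and ?A = "sup_payoff_ratio \<delta> p X x0"
  have "U_env \<delta> p ?F h \<le> ennreal (?a * best_so_far h + (\<delta> * \<epsilon> * L * ?A / (1 - \<delta>)) * (1 - ?a))"
    using U_env_add_atom_le[OF hP L(1,2) eps(1,2) \<open>0 \<in> X\<close>] .
  also have "\<dots> \<le> ennreal ((1/4 + 3 * \<eta>) * ?W)"
    using payoff_ratio_bounds[OF hP] payoff_ratio_le_sup[OF hP]
      sup_payoff_ratio_bounds[OF \<open>0 \<in> X\<close>] close
    by (intro ennreal_leI add_atom_ratio_ineq[OF \<delta> eps \<eta> y(2) L(3)]) auto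
  also have "\<dots> = ennreal ?W * ennreal (1/4 + 3 * \<eta>)"
    unfolding mult.commute[of "1/4 + 3 * \<eta>"] using \<eta> W by (intro ennreal_mult) auto
  also have "\<dots> \<le> ?V * ennreal (1/4 + 3 * \<eta>)"
    using W_le by (rule mult_right_mono) simp
  finally show "U_env \<delta> p ?F h \<le> ?V * ennreal (1/4 + 3 * \<eta>)" .
qed

end

lemma perf_ratio_le_env:
  assumes "h \<in> histories X x0" "F \<in> FS" "likelihood F h > 0"
  shows "perf_ratio \<delta> X x0 FS p \<le> U_env \<delta> p F h / (SUP q\<in>decision_rules. U_env \<delta> q F h)"
proof -
  have posterior: "posterior (return_pmf F) h F = 1" unfolding posterior_def using assms(3) by simp
  have "return_pmf F \<in> priors (consistent_envs FS h)"
    using assms(2,3) by (simp add: priors_def consistent_envs_def)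
  with assms(1)
  have "perf_ratio \<delta> X x0 FS p \<le> U_prior \<delta> p (return_pmf F) h / V_prior \<delta> (return_pmf F) h"
    unfolding perf_ratio_def by (blast intro: INF_lower2)
  then show ?thesis by (simp add: V_prior_def U_prior_def posterior)
qed

lemma exists_env_ratio_le:
  assumes \<delta>: "0 < \<delta>" "\<delta> < 1" and X: "X \<in> sets borel" "0 \<in> X" "\<not> bdd_above X" and x0: "x0 > 0"
    and p: "p \<in> decision_rules" and \<eta>: "0 < \<eta>"
    and hP: "(h, P) \<in> situations X x0"
    and close: "sup_payoff_ratio \<delta> p X x0 - \<eta> \<le> payoff_ratio \<delta> p (h, P)"
  shows "\<exists>F\<in>envs X. likelihood F h > 0
    \<and> U_env \<delta> p F h / (SUP q\<in>decision_rules. U_env \<delta> q F h) \<le> ennreal (1/4 + 3 * \<eta>)"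
proof -
  let ?y = "best_so_far h"
  have fin: "finite (set_pmf P)" and below: "\<forall>s\<in>set_pmf P. s \<le> ?y"
    using hP by (auto simp: situations_def)
  define \<epsilon> where "\<epsilon> = min (1/2) (\<eta> * (1 - \<delta>) / \<delta>)"
  have eps: "0 < \<epsilon>" "\<epsilon> < 1" "\<delta> * \<epsilon> \<le> \<eta> * (1 - \<delta>)"
    using \<eta> \<delta> by (auto simp: \<epsilon>_def min_def field_simps)
  obtain L where L: "L \<in> X" "max ?y (?y / (\<delta> * \<epsilon> * \<eta>)) < L"
    using X(3) unfolding bdd_above_def by (meson not_le)
  have L_big: "?y < L" "?y \<le> \<delta> * \<epsilon> * L * \<eta>"
    using L(2) \<delta> eps \<eta> by (auto simp: pos_divide_less_eq mult_ac)
  have L_new: "L \<notin> set_pmf P" using below L_big by force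
  let ?F = "env_of_pmf (add_atom \<epsilon> L P)"
  have "?F \<in> envs X"
    using hP L set_pmf_add_atom[OF eps(1,2) L_new fin] X(1)
    by (intro env_of_pmf_in_envs finite_set_pmf_add_atom[OF eps(1,2) L_new fin])
      (auto simp: situations_def)
  moreover have "likelihood ?F h > 0"
    using hP set_pmf_add_atom[OF eps(1,2) L_new fin]
    by (intro likelihood_env_of_pmf_pos) (auto simp: situations_def)
  moreover have "U_env \<delta> p ?F h / (SUP q\<in>decision_rules. U_env \<delta> q ?F h) \<le> ennreal (1/4 + 3 * \<eta>)"
    by (rule add_atom_ratio_le[OF \<delta> p x0 \<eta> hP close eps L(1) L_big X(2)])
  ultimately show ?thesis by blast
qed

lemma perf_ratio_le_quarter:
  assumes \<delta>: "0 < \<delta>" "\<delta> < 1" and X: "X \<in> sets borel" "0 \<in> X" "\<not> bdd_above X" and x0: "x0 > 0"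
    and p: "p \<in> decision_rules"
  shows "perf_ratio \<delta> X x0 (envs X) p \<le> 1/4"
proof (rule ennreal_le_epsilon)
  fix e :: real assume "0 < e"
  let ?A = "sup_payoff_ratio \<delta> p X x0"
  have "?A - e / 3 < ?A" using \<open>0 < e\<close> by simp
  then obtain c where c: "c \<in> situations X x0" "?A - e / 3 < payoff_ratio \<delta> p c"
    using less_cSupD[of "payoff_ratio \<delta> p ` situations X x0"] initial_situation[OF X(2), of x0] x0
    unfolding sup_payoff_ratio_def by fastforce
  obtain h P where hP: "c = (h, P)" by fastforce
  obtain F where F: "F \<in> envs X" "likelihood F h > 0"
    and ratio: "U_env \<delta> p F h / (SUP q\<in>decision_rules. U_env \<delta> q F h) \<le> ennreal (1/4 + 3 * (e / 3))"
    using exists_env_ratio_le[OF \<delta> X x0 p _ c(1)[unfolded hP], of "e / 3"] c(2) hP \<open>0 < e\<close>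
    by (auto simp del: times_divide_eq_right)
  have h: "h \<in> histories X x0" using c hP by (simp add: situations_def)
  have "perf_ratio \<delta> X x0 (envs X) p \<le> U_env \<delta> p F h / (SUP q\<in>decision_rules. U_env \<delta> q F h)"
    by (rule perf_ratio_le_env[OF h F])
  also have "\<dots> \<le> 1/4 + ennreal e"
    using ratio \<open>0 < e\<close> by (simp add: ennreal_plus ennreal_quarter)
  finally show "perf_ratio \<delta> X x0 (envs X) p \<le> 1/4 + ennreal e" .
qed

theorem theorem2:
  fixes \<delta> x0 :: real and X :: "real set"
  assumes "0 < \<delta>" "\<delta> < 1" "X \<in> sets borel" "X \<subseteq> {0..}" "0 \<in> X" "x0 > 0"
  shows "perf_ratio \<delta> X x0 (envs X) (\<lambda>_. (1 - \<delta>) / (2 - \<delta>)) \<ge> 1/4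
         \<and> (\<not> bdd_above X \<longrightarrow> dyn_robust \<delta> X x0 (envs X) (\<lambda>_. (1 - \<delta>) / (2 - \<delta>)))"
proof
  let ?pbar = "\<lambda>_. (1 - \<delta>) / (2 - \<delta>)"
  show quarter: "perf_ratio \<delta> X x0 (envs X) ?pbar \<ge> 1/4"
    using perf_ratio_pbar_ge_quarter[OF assms(1,2,6)] by simp
  show "\<not> bdd_above X \<longrightarrow> dyn_robust \<delta> X x0 (envs X) ?pbar"
  proof
    assume "\<not> bdd_above X"
    have "opt_ratio \<delta> X x0 (envs X) \<le> perf_ratio \<delta> X x0 (envs X) ?pbar"
      unfolding opt_ratio_def
      using perf_ratio_le_quarter[OF assms(1,2,3,5) \<open>\<not> bdd_above X\<close> assms(6)] quarter
      by (blast intro: SUP_least order_trans)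
    moreover have "?pbar \<in> decision_rules"
      unfolding decision_rules_def using assms(1,2) by auto
    then have "perf_ratio \<delta> X x0 (envs X) ?pbar \<le> opt_ratio \<delta> X x0 (envs X)"
      unfolding opt_ratio_def by (rule SUP_upper)
    ultimately show "dyn_robust \<delta> X x0 (envs X) ?pbar"
      unfolding dyn_robust_def by (rule antisym[rotated])
  qed
qed

end
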